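(* In the neutral case $\gamma=0$, for $\theta>0$, $m\ge2$ and $t\ge0$, \[ \lim_{N\to\infty}N\theta\,\mathbb E^0_{1/N}\Big[\int_0^{t}\big(1-\xi_u^m-(1-\xi_u)^m\big)du\Big]=\theta\int_0^t\big(\mathbb E^0_m(A_u)-\mathbb P^0_m(A_u=1)\big)du=\theta\sum_{k=2}^m\big(1+(-1)^k\big)\big(1-e^{-\binom k2 t}\big)\frac{2k-1}{\binom k2}\frac{m_{[k]}}{m_{(k)}}, \] where $m_{[k]}=\Gamma(m+1)/\Gamma(m-k+1)$ and $m_{(k)}=\Gamma(m+k)/\Gamma(m)$.
   Context: $(\xi_t)$ under $\mathbb P^0_x,\mathbb E^0_x$ is the neutral Wright–Fisher diffusion $d\xi_t=\sqrt{\xi_t(1-\xi_t)}\,dW_t$ on $[0,1]$ started at $x$, absorbed at $0$ and $1$. $(A_t)$ under $\mathbb P^0_m,\mathbb E^0_m$ is Kingman's coalescent started at $A_0=m$: the pure death process on $\{1,2,\dots\}$ jumping from $k$ to $k-1$ at rate $\binom k2$. *)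

theory Defs
  imports "HOL-Probability.Probability"
begin

definition natural_events :: "'a measure \<Rightarrow> (real \<Rightarrow> 'a \<Rightarrow> real) \<Rightarrow> real \<Rightarrow> 'a set set" where
  "natural_events M X s =
     sigma_sets (space M) (\<Union>r\<in>{0..s}. {X r -` A \<inter> space M | A. A \<in> sets borel})"

text \<open>X under M is a neutral Wright-Fisher diffusion dxi = sqrt(xi(1-xi)) dW on [0,1]
  started at x: continuous [0,1]-valued paths, X 0 = x, solving the martingale problem
  for the generator (1/2) y (1-y) f''(y) for all C^2 functions f, with respect to the
  natural filtration. (Absorption at 0 and 1 is automatic.)\<close>
definition is_neutral_WF :: "'a measure \<Rightarrow> (real \<Rightarrow> 'a \<Rightarrow> real) \<Rightarrow> real \<Rightarrow> bool" where
  "is_neutral_WF M X x \<longleftrightarrow>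
     prob_space M \<and>
     (\<forall>t\<ge>0. X t \<in> borel_measurable M) \<and>
     (\<forall>\<omega>\<in>space M. X 0 \<omega> = x \<and> continuous_on {0..} (\<lambda>t. X t \<omega>) \<and>
        (\<forall>t\<ge>0. X t \<omega> \<in> {0..1})) \<and>
     (\<forall>f f' f''. (\<forall>y. (f has_real_derivative f' y) (at y)) \<and>
                (\<forall>y. (f' has_real_derivative f'' y) (at y)) \<and> continuous_on UNIV f'' \<longrightarrow>
        (\<forall>s t. 0 \<le> s \<and> s \<le> t \<longrightarrow>
          (\<forall>B\<in>natural_events M X s.
             integral\<^sup>L M (\<lambda>\<omega>. indicator B \<omega> *
               (f (X t \<omega>) - f (X s \<omega>) -
                (LBINT u=s..t. X u \<omega> * (1 - X u \<omega>) / 2 * f'' (X u \<omega>)))) = 0)))"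

definition kingman_times :: "'b measure \<Rightarrow> (nat \<Rightarrow> 'b \<Rightarrow> real) \<Rightarrow> nat \<Rightarrow> bool" where
  "kingman_times M T m \<longleftrightarrow>
     prob_space M \<and> prob_space.indep_vars M (\<lambda>_. borel) T {2..m} \<and>
     (\<forall>k\<in>{2..m}. distributed M lborel (T k) (exponential_density (real (k choose 2))))"

text \<open>The state A_u of the pure death process built from the holding times:
  A_u = k iff T(k+1)+...+T(m) \<le> u < T(k)+...+T(m) (right-continuous paths).\<close>
definition kingman_state :: "nat \<Rightarrow> (nat \<Rightarrow> 'b \<Rightarrow> real) \<Rightarrow> real \<Rightarrow> 'b \<Rightarrow> nat" where
  "kingman_state m T u \<omega> = (LEAST k. 1 \<le> k \<and> (\<Sum>j\<in>{k<..m}. T j \<omega>) \<le> u)"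

end

theory Submission
  imports Defs
begin

text \<open>Write \<open>\<lambda>\<^sub>k = k(k-1)/2\<close> and \<open>G\<^sub>k(t) = \<bbbP>\<^sub>m(A\<^sub>t > k)\<close>. The tails solve the backward system
  \<open>G\<^sub>k' = -\<lambda>\<^sub>k\<^sub>+\<^sub>1 (G\<^sub>k - G\<^sub>k\<^sub>+\<^sub>1)\<close>, \<open>G\<^sub>k(0) = 1\<close>, \<open>G\<^sub>m = 0\<close>, and every solution of the forward system
  \<open>\<mu>\<^sub>k' = \<lambda>\<^sub>k (\<mu>\<^sub>k\<^sub>-\<^sub>1 - \<mu>\<^sub>k)\<close> is transported along them:
  \<open>\<mu>\<^sub>m(t) = \<mu>\<^sub>1(0) + \<Sum>\<^sub>k\<^sub><\<^sub>m G\<^sub>k(t) (\<mu>\<^sub>k\<^sub>+\<^sub>1(0) - \<mu>\<^sub>k(0))\<close>.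

  By Dynkin's formula the moments \<open>\<bbbE>\<^sub>x[\<xi>\<^sub>t\<^sup>k]\<close> solve the forward system, and so do those of
  \<open>1 - \<xi>\<close>, which is again a neutral Wright--Fisher diffusion. Hence
  \<open>\<bbbE>\<^sub>x[1 - \<xi>\<^sub>t\<^sup>m - (1 - \<xi>\<^sub>t)\<^sup>m] = \<Sum>\<^sub>k\<^sub><\<^sub>m (x\<^sup>k(1 - x) + x(1 - x)\<^sup>k) G\<^sub>k(t)\<close>; at \<open>x = 1/N\<close> the weights
  times \<open>N\<close> tend to \<open>2\<close> for \<open>k = 1\<close> and to \<open>1\<close> otherwise, and \<open>\<Sum>\<^sub>k\<^sub><\<^sub>m (1 + [k = 1]) G\<^sub>k(t)\<close> is
  exactly \<open>\<bbbE>\<^sub>m[A\<^sub>t] - \<bbbP>\<^sub>m(A\<^sub>t = 1)\<close>. The closed form comes from a third solution of the forward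
  system, a combination of the exponentials \<open>e\<^sup>-\<^sup>\<lambda>\<^sup>\<^sub>j\<^sup>t\<close> whose coefficients are determined by two
  telescoping sums of the ratios \<open>k\<^sub>[\<^sub>j\<^sub>] / k\<^sub>(\<^sub>j\<^sub>)\<close>.\<close>

section \<open>Coalescence rates and the spectral solution\<close>

definition coal_rate :: "nat \<Rightarrow> real" where
  "coal_rate k = real (k choose 2)"

lemma coal_rate_eq: "coal_rate k = real k * (real k - 1) / 2"
proof (induction k)
  case (Suc k)
  have "Suc k choose 2 = k + (k choose 2)"
    by (simp add: numeral_2_eq_2)
  then show ?case using Suc by (simp add: coal_rate_def field_simps)
qed (simp add: coal_rate_def)

lemma coal_rate_Suc_0 [simp]: "coal_rate (Suc 0) = 0"
  by (simp add: coal_rate_def)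

lemma coal_rate_nonneg: "0 \<le> coal_rate k"
  by (simp add: coal_rate_def)

lemma coal_rate_pos: "2 \<le> k \<Longrightarrow> 0 < coal_rate k"
  by (simp add: coal_rate_def)

text \<open>\<open>fr_ratio j k = k\<^sub>[\<^sub>j\<^sub>] / k\<^sub>(\<^sub>j\<^sub>)\<close>, falling over rising factorial.\<close>
fun fr_ratio :: "nat \<Rightarrow> real \<Rightarrow> real" where
  "fr_ratio 0 k = 1"
| "fr_ratio (Suc j) k = fr_ratio j k * (k - real j) / (k + real j)"

lemma fr_ratio_eq_0: "k < j \<Longrightarrow> fr_ratio j (real k) = 0"
  by (induction j) (auto simp: less_Suc_eq)

declare fr_ratio.simps(2) [simp del]

lemma Gamma_ratio_eq_fr_ratio:
  assumes "j \<le> m" "1 \<le> m"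
  shows "Gamma (real m + 1) / Gamma (real m - real j + 1) / (Gamma (real m + real j) / Gamma (real m))
         = fr_ratio j (real m)"
  using assms(1)
proof (induction j)
  case 0
  have "Gamma (real m + 1) \<noteq> 0" "Gamma (real m) \<noteq> 0"
    using assms by (auto intro!: less_imp_neq[symmetric] Gamma_real_pos)
  then show ?case by simp
next
  case (Suc j)
  have "real m - real (Suc j) + 1 \<notin> \<int>\<^sub>\<le>\<^sub>0" "real m + real j \<notin> \<int>\<^sub>\<le>\<^sub>0"
    using Suc.prems assms by (auto dest: nonpos_Ints_nonpos)
  then have Gamma_Suc: "Gamma (real m - real j + 1) = (real m - real j) * Gamma (real m - real (Suc j) + 1)"
    "Gamma (real m + real (Suc j)) = (real m + real j) * Gamma (real m + real j)"
    using Gamma_plus1[of "real m - real (Suc j) + 1"] Gamma_plus1[of "real m + real j"]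
    by (simp_all add: algebra_simps)
  have nz: "Gamma (real m - real (Suc j) + 1) \<noteq> 0" "Gamma (real m + real j) \<noteq> 0"
    "Gamma (real m) \<noteq> 0" "Gamma (real m + 1) \<noteq> 0" "real m - real j \<noteq> 0" "real m + real j \<noteq> 0"
    using Suc.prems assms by (auto intro!: less_imp_neq[symmetric] Gamma_real_pos)
  have "fr_ratio (Suc j) (real m) = Gamma (real m + 1) / Gamma (real m - real j + 1)
      / (Gamma (real m + real j) / Gamma (real m)) * (real m - real j) / (real m + real j)"
    using Suc by (simp add: fr_ratio.simps(2))
  also have "\<dots> = Gamma (real m + 1) / Gamma (real m - real (Suc j) + 1)
      / (Gamma (real m + real (Suc j)) / Gamma (real m))"
  proof -
    have "A / (a * B) / (C / D) * a / b = A / B / ((b * C) / D)"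
      if "a \<noteq> 0" "b \<noteq> 0" "B \<noteq> 0" "C \<noteq> 0" "D \<noteq> 0" for a b A B C D :: real
      using that by (simp add: field_simps)
    then show ?thesis unfolding Gamma_Suc using nz by blast
  qed
  finally show ?case by simp
qed

lemma fr_ratio_recurrence:
  assumes "1 \<le> k"
  shows "(real k - real j) * (real k + real j - 1) * fr_ratio j (real k)
       = real k * (real k - 1) * fr_ratio j (real k - 1)"
proof (induction j)
  case (Suc j)
  show ?case
  proof (cases "k = 1 \<and> j = 0")
    case False
    then have nz: "real k - 1 + real j \<noteq> 0" "real k + real j \<noteq> 0"
      using assms by auto
    have "(real k - real (Suc j)) * (real k + real (Suc j) - 1) * fr_ratio (Suc j) (real k)
        = (real k - real j - 1) / (real k - 1 + real j)
          * ((real k - real j) * (real k + real j - 1) * fr_ratio j (real k))"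
      using nz by (simp add: fr_ratio.simps(2) field_simps)
    also have "\<dots> = (real k - real j - 1) / (real k - 1 + real j)
          * (real k * (real k - 1) * fr_ratio j (real k - 1))"
      unfolding Suc.IH ..
    also have "\<dots> = real k * (real k - 1) * fr_ratio (Suc j) (real k - 1)"
      using nz by (simp add: fr_ratio.simps(2) field_simps)
    finally show ?thesis .
  qed (simp add: fr_ratio.simps(2))
qed simp

lemma sum_fr_ratio:
  assumes "1 \<le> k"
  shows "(\<Sum>j=1..n. (2 * real j - 1) * fr_ratio j (real k))
         = real k - fr_ratio (Suc n) (real k) * (real k + real n)"
proof (induction n)
  case (Suc n)
  have nz: "real k + real n + 1 \<noteq> 0" using assms by auto
  obtain r where r: "r = fr_ratio (Suc n) (real k)" by blast
  have "(\<Sum>j=1..Suc n. (2 * real j - 1) * fr_ratio j (real k))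
     = real k - r * (real k + real n) + (2 * real (Suc n) - 1) * r"
    using Suc r by (simp add: sum.cl_ivl_Suc)
  also have "\<dots> = real k - r * (real k - real (Suc n)) / (real k + real (Suc n)) * (real k + real (Suc n))"
    using nz by (simp add: field_simps)
  also have "\<dots> = real k - fr_ratio (Suc (Suc n)) (real k) * (real k + real (Suc n))"
    by (simp add: fr_ratio.simps(2) r)
  finally show ?case .
qed (simp add: fr_ratio.simps(2))

lemma sum_alternating_fr_ratio:
  assumes "2 \<le> k"
  shows "(\<Sum>j=1..n. (-1)^(j-1) * (2 * real j - 1) * fr_ratio j (real k))
         = - ((-1)^n * real n * (real k + real n) / (real k - 1) * fr_ratio (Suc n) (real k))"
proof (induction n)
  case (Suc n)
  have nz: "real k + real n + 1 \<noteq> 0" "real k - 1 \<noteq> 0" using assms by auto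
  obtain r where r: "r = fr_ratio (Suc n) (real k)" by blast
  obtain s :: real where s: "s = (-1)^n" by blast
  have "(\<Sum>j=1..Suc n. (-1)^(j-1) * (2 * real j - 1) * fr_ratio j (real k))
     = - (s * real n * (real k + real n) / (real k - 1) * r) + s * (2 * real (Suc n) - 1) * r"
    using Suc r s by (simp add: sum.cl_ivl_Suc)
  also have "\<dots> = - ((- s) * real (Suc n) * (real k + real (Suc n)) / (real k - 1) *
          (r * (real k - real (Suc n)) / (real k + real (Suc n))))"
    using nz by (simp add: divide_simps) (simp add: algebra_simps)
  also have "\<dots> = - ((-1)^(Suc n) * real (Suc n) * (real k + real (Suc n)) / (real k - 1)
          * fr_ratio (Suc (Suc n)) (real k))"
    by (simp add: fr_ratio.simps(2) r s)
  finally show ?case .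
qed simp

definition spectral_coeff :: "nat \<Rightarrow> real \<Rightarrow> real" where
  "spectral_coeff j k = (1 + (-1)^j) * (2 * real j - 1) * fr_ratio j k"

lemma sum_spectral_coeff:
  assumes "1 \<le> k" "k \<le> m"
  shows "(\<Sum>j=2..m. spectral_coeff j (real k)) = real k - (if k = 1 then 1 else 0)"
proof (cases "k = 1")
  case True
  have "spectral_coeff j (real k) = 0" if "j \<in> {2..m}" for j
    using that True fr_ratio_eq_0[of k j] by (simp add: spectral_coeff_def)
  with True show ?thesis by simp
next
  case False
  then have k: "2 \<le> k" using assms by simp
  have "(\<Sum>j=1..m. spectral_coeff j (real k)) = spectral_coeff 1 (real k) + (\<Sum>j=2..m. spectral_coeff j (real k))"
    using assms by (simp add: sum.atLeast_Suc_atMost numeral_2_eq_2)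
  then have "(\<Sum>j=2..m. spectral_coeff j (real k)) = (\<Sum>j=1..m. spectral_coeff j (real k))"
    by (simp add: spectral_coeff_def)
  also have "\<dots> = (\<Sum>j=1..m. (2 * real j - 1) * fr_ratio j (real k))
                 - (\<Sum>j=1..m. (-1)^(j-1) * (2 * real j - 1) * fr_ratio j (real k))"
  proof -
    have "(-1::real)^j = - ((-1)^(j-1))" if "1 \<le> j" for j
      using that by (simp add: power_eq_if)
    then show ?thesis
      by (simp add: sum_subtractf[symmetric] spectral_coeff_def algebra_simps)
  qed
  also have "\<dots> = real k"
    using sum_fr_ratio[of k m] sum_alternating_fr_ratio[OF k, of m] fr_ratio_eq_0[of k "Suc m"] assms
    by simp
  finally show ?thesis using False by simp
qed

lemma spectral_coeff_recurrence:
  assumes "1 \<le> k"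
  shows "(coal_rate k - coal_rate j) * spectral_coeff j (real k)
       = coal_rate k * spectral_coeff j (real (k - 1))"
proof -
  have "coal_rate k - coal_rate j = (real k - real j) * (real k + real j - 1) / 2"
    by (simp add: coal_rate_eq field_simps)
  then show ?thesis
    using fr_ratio_recurrence[OF assms, of j] assms
    by (simp add: spectral_coeff_def coal_rate_eq of_nat_diff) (simp add: field_simps)
qed

text \<open>The explicit solution: \<open>spectral_sum m k s\<close> is \<open>\<bbbE>\<^sub>k[A\<^sub>s] - \<bbbP>\<^sub>k(A\<^sub>s = 1)\<close>
  for the coalescent started at \<open>k \<le> m\<close>.\<close>
definition spectral_sum :: "nat \<Rightarrow> nat \<Rightarrow> real \<Rightarrow> real" where
  "spectral_sum m k s = (\<Sum>j=2..m. spectral_coeff j (real k) * exp (- coal_rate j * s))"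

lemma spectral_sum_has_derivative:
  assumes "1 \<le> k"
  shows "(spectral_sum m k has_real_derivative
           coal_rate k * (spectral_sum m (k - 1) s - spectral_sum m k s)) (at s within S)"
proof -
  have "spectral_coeff j (real k) * (exp (- coal_rate j * s) * (- coal_rate j))
      = coal_rate k * (spectral_coeff j (real (k - 1)) * exp (- coal_rate j * s))
        - coal_rate k * (spectral_coeff j (real k) * exp (- coal_rate j * s))" for j
  proof -
    have "coal_rate k * spectral_coeff j (real k) * exp (- coal_rate j * s)
        = (coal_rate j * spectral_coeff j (real k) + coal_rate k * spectral_coeff j (real (k - 1)))
          * exp (- coal_rate j * s)"
      using spectral_coeff_recurrence[OF assms, of j] by (simp add: algebra_simps)
    then show ?thesis by (simp add: algebra_simps)
  qed
  then have "(\<Sum>j=2..m. spectral_coeff j (real k) * (exp (- coal_rate j * s) * (- coal_rate j)))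
      = coal_rate k * (spectral_sum m (k - 1) s - spectral_sum m k s)"
    unfolding spectral_sum_def by (simp add: sum_subtractf sum_distrib_left right_diff_distrib)
  moreover have "(spectral_sum m k has_real_derivative
      (\<Sum>j=2..m. spectral_coeff j (real k) * (exp (- coal_rate j * s) * (- coal_rate j)))) (at s within S)"
    unfolding spectral_sum_def by (auto intro!: derivative_eq_intros sum.cong simp: algebra_simps)
  ultimately show ?thesis by simp
qed

lemma spectral_sum_0:
  assumes "1 \<le> k" "k \<le> m"
  shows "spectral_sum m k 0 = real k - (if k = 1 then 1 else 0)"
  using sum_spectral_coeff[OF assms] by (simp add: spectral_sum_def)

lemma interval_integral_spectral_sum:
  assumes "0 \<le> t"
  shows "(LBINT u=0..t. spectral_sum m m u)
       = (\<Sum>j=2..m. spectral_coeff j (real m) * (1 - exp (- coal_rate j * t)) / coal_rate j)"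
proof -
  have nz: "coal_rate j \<noteq> 0" if "j \<in> {2..m}" for j
    using coal_rate_pos[of j] that by auto
  define F where "F u = (\<Sum>j=2..m. spectral_coeff j (real m) / coal_rate j * (- exp (- coal_rate j * u)))"
    for u
  have "(LBINT u=0..t. spectral_sum m m u) = F t - F 0"
    unfolding zero_ereal_def
  proof (rule interval_integral_FTC_finite)
    show "continuous_on {min 0 t..max 0 t} (spectral_sum m m)"
      unfolding spectral_sum_def by (intro continuous_intros)
    fix x
    have "(F has_real_derivative spectral_sum m m x) (at x within {min 0 t..max 0 t})"
      unfolding F_def spectral_sum_def by (auto intro!: derivative_eq_intros sum.cong simp: nz)
    then show "(F has_vector_derivative spectral_sum m m x) (at x within {min 0 t..max 0 t})"
      by (simp add: has_real_derivative_iff_has_vector_derivative)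
  qed
  also have "\<dots> = (\<Sum>j=2..m. spectral_coeff j (real m) * (1 - exp (- coal_rate j * t)) / coal_rate j)"
    unfolding F_def by (auto simp: sum_subtractf[symmetric] field_simps nz intro!: sum.cong)
  finally show ?thesis .
qed

section \<open>A triangular linear system and its dual\<close>

lemma has_real_derivative_reflect:
  assumes "(G has_real_derivative g) (at (t - s) within {0..t})" "s \<in> {0..t}"
  shows "((\<lambda>s. G (t - s)) has_real_derivative - g) (at s within {0..t})"
proof -
  have img: "(\<lambda>s. t - s) ` {0..t} = {0..t}"
    by (auto simp: image_iff intro!: bexI[of _ "t - x" for x])
  have "((\<lambda>s. t - s) has_real_derivative -1) (at s within {0..t})"
    by (auto intro!: derivative_eq_intros)
  with assms(1) show ?thesis
    using DERIV_image_chain[of G g "\<lambda>s. t - s" s "{0..t}" "-1"] by (simp add: img comp_def)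
qed

text \<open>If \<open>G\<^sub>k' = -\<lambda>\<^sub>k\<^sub>+\<^sub>1 (G\<^sub>k - G\<^sub>k\<^sub>+\<^sub>1)\<close> and \<open>\<mu>\<^sub>k' = \<lambda>\<^sub>k (\<mu>\<^sub>k\<^sub>-\<^sub>1 - \<mu>\<^sub>k)\<close>, then
  \<open>\<mu>\<^sub>1(s) + \<Sum>\<^sub>k G\<^sub>k(t - s) (\<mu>\<^sub>k\<^sub>+\<^sub>1(s) - \<mu>\<^sub>k(s))\<close> is constant in \<open>s\<close>: its derivative
  telescopes to the boundary terms at \<open>k = 1\<close> (where \<open>\<lambda>\<^sub>1 = 0\<close>) and \<open>k = m\<close> (where \<open>G\<^sub>m = 0\<close>).\<close>
lemma triangular_duality:
  fixes G \<mu> :: "nat \<Rightarrow> real \<Rightarrow> real"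
  assumes t: "0 \<le> t" and m: "1 \<le> m"
    and Gm: "\<And>u. u \<in> {0..t} \<Longrightarrow> G m u = 0"
    and G0: "\<And>k. k \<in> {1..<m} \<Longrightarrow> G k 0 = 1"
    and dG: "\<And>k u. k \<in> {1..<m} \<Longrightarrow> u \<in> {0..t} \<Longrightarrow>
      (G k has_real_derivative (- coal_rate (Suc k) * (G k u - G (Suc k) u))) (at u within {0..t})"
    and d\<mu>: "\<And>k u. k \<in> {1..m} \<Longrightarrow> u \<in> {0..t} \<Longrightarrow>
      (\<mu> k has_real_derivative (coal_rate k * (\<mu> (k - 1) u - \<mu> k u))) (at u within {0..t})"
  shows "\<mu> m t = \<mu> 1 0 + (\<Sum>k=1..<m. G k t * (\<mu> (Suc k) 0 - \<mu> k 0))"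
proof -
  define F where "F s = \<mu> 1 s + (\<Sum>k=1..<m. G k (t - s) * (\<mu> (Suc k) s - \<mu> k s))" for s
  have "(F has_real_derivative 0) (at s within {0..t})" if s: "s \<in> {0..t}" for s
  proof -
    let ?b = "\<lambda>k. coal_rate k * G k (t - s) * (\<mu> k s - \<mu> (k - 1) s)"
    have "((\<lambda>s. G k (t - s) * (\<mu> (Suc k) s - \<mu> k s)) has_real_derivative ?b k - ?b (Suc k))
        (at s within {0..t})" if k: "k \<in> {1..<m}" for k
    proof -
      have "t - s \<in> {0..t}" using s by auto
      then have "((\<lambda>s. G k (t - s)) has_real_derivative
          coal_rate (Suc k) * (G k (t - s) - G (Suc k) (t - s))) (at s within {0..t})"
        using has_real_derivative_reflect[OF dG[OF k] s] by simp
      moreover have "((\<lambda>s. \<mu> (Suc k) s - \<mu> k s) has_real_derivative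
          coal_rate (Suc k) * (\<mu> k s - \<mu> (Suc k) s) - coal_rate k * (\<mu> (k - 1) s - \<mu> k s))
          (at s within {0..t})"
        using d\<mu>[of "Suc k" s] d\<mu>[of k s] k s by (auto intro!: derivative_eq_intros)
      ultimately show ?thesis
        by (auto dest: DERIV_mult simp: algebra_simps)
    qed
    then have "((\<lambda>s. \<Sum>k=1..<m. G k (t - s) * (\<mu> (Suc k) s - \<mu> k s)) has_real_derivative
        (\<Sum>k=1..<m. ?b k - ?b (Suc k))) (at s within {0..t})"
      by (rule DERIV_sum)
    moreover have "(\<Sum>k=1..<m. ?b k - ?b (Suc k)) = 0"
    proof -
      have "(\<Sum>k=1..<m. ?b k - ?b (Suc k)) = - (\<Sum>k=1..<m. ?b (Suc k) - ?b k)"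
        by (simp add: sum_negf[symmetric])
      also have "\<dots> = ?b 1 - ?b m"
        using sum_Suc_diff'[of 1 m ?b] m by simp
      finally show ?thesis using Gm[of "t - s"] s by simp
    qed
    moreover have "(\<mu> 1 has_real_derivative 0) (at s within {0..t})"
      using d\<mu>[of 1 s] m s by simp
    ultimately show ?thesis
      unfolding F_def by (auto dest: DERIV_add)
  qed
  then have "F t = F 0"
    using has_field_derivative_zero_constant[of "{0..t}" F] t by (metis atLeastAtMost_iff convex_real_interval(5) order_refl)
  moreover have "F t = \<mu> m t"
    using sum_Suc_diff'[of 1 m "\<lambda>k. \<mu> k t"] m G0 by (simp add: F_def)
  ultimately show ?thesis unfolding F_def by simp
qed

lemma LBINT_eq_integral_bounded:
  fixes f :: "real \<Rightarrow> real"
  assumes "0 \<le> t" "f \<in> borel_measurable borel" "\<And>v. v \<in> {0..t} \<Longrightarrow> \<bar>f v\<bar> \<le> B"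
  shows "(LBINT v=0..t. f v) = integral {0..t} f" "f integrable_on {0..t}"
proof -
  have si: "set_integrable lborel {0..t} f"
    unfolding set_integrable_def using assms
    by (intro integrableI_bounded_set_indicator[where B=B]) (auto simp: emeasure_lborel_Icc_eq)
  then show "(LBINT v=0..t. f v) = integral {0..t} f"
    unfolding zero_ereal_def using assms by (intro interval_integral_eq_integral) auto
  show "f integrable_on {0..t}" using si set_borel_integral_eq_integral(1) by blast
qed

lemma interval_integral_cong_nonneg:
  fixes f g :: "real \<Rightarrow> real" and t :: real
  assumes "0 \<le> t" "\<And>u. 0 \<le> u \<Longrightarrow> f u = g u"
  shows "(LBINT u=0..t. f u) = (LBINT u=0..t. g u)"
proof (rule interval_integral_cong)
  fix u assume "u \<in> einterval (min 0 (ereal t)) (max 0 (ereal t))"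
  then have "0 \<le> u" using assms(1) by (auto simp: einterval_def zero_ereal_def)
  then show "f u = g u" by (rule assms(2))
qed

lemma integral_equation_continuous_on:
  fixes \<phi> \<psi> :: "real \<Rightarrow> real"
  assumes eq: "\<And>s. 0 \<le> s \<Longrightarrow> \<phi> s = \<phi> 0 + (LBINT u=0..s. \<psi> u)"
    and \<psi>: "\<psi> \<in> borel_measurable borel" "\<And>u. \<bar>\<psi> u\<bar> \<le> B"
  shows "continuous_on {0..t} \<phi>"
proof (cases "0 \<le> t")
  case True
  have "\<phi> s = \<phi> 0 + integral {0..s} \<psi>" if "s \<in> {0..t}" for s
    using eq[of s] LBINT_eq_integral_bounded(1)[of s \<psi> B] that \<psi> by simp
  moreover have "continuous_on {0..t} (\<lambda>s. \<phi> 0 + integral {0..s} \<psi>)"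
    using LBINT_eq_integral_bounded(2)[OF True \<psi>(1), of B] \<psi>(2)
    by (intro continuous_intros indefinite_integral_continuous_1) auto
  ultimately show ?thesis
    by (metis (no_types, lifting) continuous_on_cong)
qed simp

lemma integral_equation_has_derivative:
  fixes \<phi> \<psi> :: "real \<Rightarrow> real"
  assumes eq: "\<And>s. 0 \<le> s \<Longrightarrow> \<phi> s = \<phi> 0 + (LBINT u=0..s. \<psi> u)"
    and \<psi>: "\<psi> \<in> borel_measurable borel" "\<And>u. \<bar>\<psi> u\<bar> \<le> B" "continuous_on {0..t} \<psi>"
    and s: "s \<in> {0..t}"
  shows "(\<phi> has_real_derivative \<psi> s) (at s within {0..t})"
proof -
  have "((\<lambda>x. \<phi> 0 + integral {0..x} \<psi>) has_real_derivative \<psi> s) (at s within {0..t})"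
    using integral_has_real_derivative[OF \<psi>(3) s] by (auto intro!: derivative_eq_intros)
  moreover have "\<phi> x = \<phi> 0 + integral {0..x} \<psi>" if "x \<in> {0..t}" for x
    using eq[of x] LBINT_eq_integral_bounded(1)[of x \<psi> B] that \<psi> by simp
  ultimately show ?thesis unfolding has_field_derivative_def
    by (rule has_derivative_transform[OF s, rotated])
qed

lemma integrable_indicator_Ioo_pair:
  fixes P :: "'a measure" and f :: "'a \<times> real \<Rightarrow> real" and t :: real
  assumes P: "finite_measure P" and f: "f \<in> borel_measurable (P \<Otimes>\<^sub>M lborel)"
    and B: "\<And>x v. x \<in> space P \<Longrightarrow> \<bar>f (x, v)\<bar> \<le> B" and t: "0 \<le> t"
  shows "integrable (P \<Otimes>\<^sub>M lborel) (\<lambda>(x, v). indicator {0<..<t} v * f (x, v))"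
proof -
  interpret P: finite_measure P by fact
  interpret PL: pair_sigma_finite P lborel
    by (simp add: P.sigma_finite_measure_axioms lborel.sigma_finite_measure_axioms pair_sigma_finite_def)
  define h where "h x v = norm (indicator {0<..<t} v * f (x, v))" for x v
  have int_x: "integrable lborel (\<lambda>v. indicator {0<..<t} v * f (x, v))" if x: "x \<in> space P" for x
  proof -
    have "integrable lborel (\<lambda>v. indicator {0<..<t} v *\<^sub>R f (x, v))"
      using f x B t by (intro integrableI_bounded_set_indicator[where B=B]) (auto simp: emeasure_lborel_Ioo)
    then show ?thesis by simp
  qed
  have "(\<integral>v. h x v \<partial>lborel) \<le> (\<integral>v. B * indicator {0<..<t} v \<partial>lborel)" if x: "x \<in> space P" for x
  proof (rule integral_mono)
    show "integrable lborel (h x)"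
      unfolding h_def using int_x[OF x] by (rule integrable_norm)
    show "integrable lborel (\<lambda>v. B * indicator {0<..<t} v :: real)"
      using t by (intro integrable_mult_right) simp
    show "h x v \<le> B * indicator {0<..<t} v" for v
      using B[OF x, of v] by (auto simp: h_def indicator_def abs_mult)
  qed
  then have "norm (\<integral>v. h x v \<partial>lborel) \<le> B * t" if "x \<in> space P" for x
    using that t by (simp add: h_def)
  moreover have "case_prod h \<in> borel_measurable (P \<Otimes>\<^sub>M lborel)"
    unfolding h_def using f by measurable
  then have "(\<lambda>x. \<integral>v. h x v \<partial>lborel) \<in> borel_measurable P"
    by (rule lborel.borel_measurable_lebesgue_integral)
  ultimately have "integrable P (\<lambda>x. \<integral>v. h x v \<partial>lborel)"
    by (intro P.integrable_const_bound[where B="B * t"]) auto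
  then show ?thesis
    using int_x f by (intro PL.Fubini_integrable) (auto simp: h_def)
qed

lemma Fubini_LBINT_bounded:
  fixes P :: "'a measure" and f :: "'a \<times> real \<Rightarrow> real" and t :: real
  assumes P: "finite_measure P" and f: "f \<in> borel_measurable (P \<Otimes>\<^sub>M lborel)"
    and B: "\<And>x v. x \<in> space P \<Longrightarrow> \<bar>f (x, v)\<bar> \<le> B" and t: "0 \<le> t"
  shows "(\<integral>x. (LBINT v=0..t. f (x, v)) \<partial>P) = (LBINT v=0..t. \<integral>x. f (x, v) \<partial>P)"
    and "integrable P (\<lambda>x. LBINT v=0..t. f (x, v))"
proof -
  interpret P: finite_measure P by fact
  interpret PL: pair_sigma_finite P lborel
    by (simp add: P.sigma_finite_measure_axioms lborel.sigma_finite_measure_axioms pair_sigma_finite_def)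
  have lb: "(LBINT v=0..t. g v) = (\<integral>v. indicator {0<..<t} v * g v \<partial>lborel)" for g :: "real \<Rightarrow> real"
    unfolding zero_ereal_def using t by (simp add: interval_integral_Ioo set_lebesgue_integral_def)
  note int = integrable_indicator_Ioo_pair[OF P f B t]
  show "(\<integral>x. (LBINT v=0..t. f (x, v)) \<partial>P) = (LBINT v=0..t. \<integral>x. f (x, v) \<partial>P)"
    using PL.Fubini_integral[of "\<lambda>x v. indicator {0<..<t} v * f (x, v)"] int by (simp add: lb)
  show "integrable P (\<lambda>x. LBINT v=0..t. f (x, v))"
    using PL.integrable_fst'[OF int] by (simp add: lb)
qed

lemma borel_measurable_integral_fst:
  fixes P :: "'a measure" and f :: "'a \<times> real \<Rightarrow> real"
  assumes "sigma_finite_measure P" and f: "f \<in> borel_measurable (P \<Otimes>\<^sub>M lborel)"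
  shows "(\<lambda>v. \<integral>x. f (x, v) \<partial>P) \<in> borel_measurable borel"
proof -
  interpret P: sigma_finite_measure P by fact
  have "(\<lambda>(v, x). f (x, v)) \<in> borel_measurable (lborel \<Otimes>\<^sub>M P)"
    by (rule measurable_pair_swap_iff[THEN iffD1, OF f])
  then have "(\<lambda>v. \<integral>x. f (x, v) \<partial>P) \<in> borel_measurable lborel"
    by (rule P.borel_measurable_lebesgue_integral[where f="\<lambda>v x. f (x, v)"])
  then show ?thesis by (simp only: measurable_lborel2)
qed

lemma (in prob_space) prob_eq_integral_if:
  assumes "Measurable.pred M P"
  shows "prob {\<omega>\<in>space M. P \<omega>} = (\<integral>\<omega>. (if P \<omega> then 1 else 0) \<partial>M)"
proof -
  have "prob {\<omega>\<in>space M. P \<omega>} = (\<integral>\<omega>. indicator {\<omega>\<in>space M. P \<omega>} \<omega> \<partial>M)"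
    by (simp add: Int_absorb2)
  also have "\<dots> = (\<integral>\<omega>. (if P \<omega> then 1 else 0) \<partial>M)"
    by (intro Bochner_Integration.integral_cong) (auto simp: indicator_def)
  finally show ?thesis .
qed

lemma (in prob_space) indep_var_integral_iterated:
  fixes R T :: "'a \<Rightarrow> real" and g :: "real \<times> real \<Rightarrow> real"
  assumes ind: "indep_var borel R borel T"
    and g[measurable]: "g \<in> borel_measurable (borel \<Otimes>\<^sub>M borel)" and B: "\<And>p. \<bar>g p\<bar> \<le> B"
  shows "(\<integral>\<omega>. g (R \<omega>, T \<omega>) \<partial>M) = (\<integral>\<omega>. (\<integral>\<omega>'. g (R \<omega>, T \<omega>') \<partial>M) \<partial>M)"
proof -
  have rv[measurable]: "R \<in> borel_measurable M" "T \<in> borel_measurable M"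
    using ind indep_var_rv1 indep_var_rv2 by auto
  let ?PR = "distr M borel R" let ?PT = "distr M borel T"
  interpret PR: prob_space ?PR by (rule prob_space_distr) (rule rv)
  interpret PT: prob_space ?PT by (rule prob_space_distr) (rule rv)
  interpret PP: pair_prob_space ?PR ?PT by unfold_locales
  have J: "?PR \<Otimes>\<^sub>M ?PT = distr M (borel \<Otimes>\<^sub>M borel) (\<lambda>\<omega>. (R \<omega>, T \<omega>))"
    using ind indep_var_distribution_eq by blast
  have "(\<integral>\<omega>. g (R \<omega>, T \<omega>) \<partial>M) = (\<integral>p. g p \<partial>distr M (borel \<Otimes>\<^sub>M borel) (\<lambda>\<omega>. (R \<omega>, T \<omega>)))"
    by (rule integral_distr[symmetric]) measurable
  also have "\<dots> = (\<integral>p. g p \<partial>(?PR \<Otimes>\<^sub>M ?PT))" by (simp add: J)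
  also have "\<dots> = (\<integral>r. (\<integral>\<tau>. g (r, \<tau>) \<partial>?PT) \<partial>?PR)"
  proof (rule PP.integral_fst'[symmetric])
    show "integrable (?PR \<Otimes>\<^sub>M ?PT) g"
      using B by (intro PP.integrable_const_bound[where B=B]) auto
  qed
  also have "\<dots> = (\<integral>\<omega>. (\<integral>\<tau>. g (R \<omega>, \<tau>) \<partial>?PT) \<partial>M)"
  proof (rule integral_distr)
    have "(\<lambda>(r, \<tau>). g (r, \<tau>)) \<in> borel_measurable (borel \<Otimes>\<^sub>M ?PT)"
      by (simp add: measurable_cong_sets[OF sets_pair_measure_cong[OF refl sets_distr] refl])
    then show "(\<lambda>r. \<integral>\<tau>. g (r, \<tau>) \<partial>?PT) \<in> borel_measurable borel"
      by (rule PT.borel_measurable_lebesgue_integral[where f="\<lambda>r \<tau>. g (r, \<tau>)"])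
  qed (rule rv)
  also have "\<dots> = (\<integral>\<omega>. (\<integral>\<omega>'. g (R \<omega>, T \<omega>') \<partial>M) \<partial>M)"
    by (intro Bochner_Integration.integral_cong refl integral_distr) (auto intro: rv)
  finally show ?thesis .
qed

lemma integral_shifted_exponential:
  fixes r l t :: real
  assumes r: "0 \<le> r" and l: "0 < l" and t: "0 \<le> t"
  shows "l * (LBINT v=0..t. (if r \<le> v then exp (- (v - r) * l) else 0))
         = (if r \<le> t then 1 - exp (- (t - r) * l) else 0)"
proof -
  define g where "g v = (if r \<le> v then exp (- (v - r) * l) else 0)" for v
  have gm: "g \<in> borel_measurable borel" unfolding g_def by measurable
  have gb: "\<bar>g v\<bar> \<le> 1" for v using l by (auto simp: g_def mult_le_0_iff)
  have L: "(LBINT v=0..t. g v) = integral {0..t} g"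
    using LBINT_eq_integral_bounded(1)[OF t gm gb] by simp
  define \<Phi> where "\<Phi> v = (1 - exp (- (max v r - r) * l)) / l" for v
  have "(g has_integral \<Phi> t - \<Phi> 0) {0..t}"
  proof (rule fundamental_theorem_of_calculus_interior_strong[where S="{r}"])
    show "continuous_on {0..t} \<Phi>" unfolding \<Phi>_def using l by (intro continuous_intros) auto
    fix x assume x: "x \<in> {0<..<t} - {r}"
    show "(\<Phi> has_vector_derivative g x) (at x)"
    proof (cases "r < x")
      case True
      have "((\<lambda>v. (1 - exp (- (v - r) * l)) / l) has_real_derivative g x) (at x)"
        using True l by (auto intro!: derivative_eq_intros simp: g_def)
      then have "(\<Phi> has_real_derivative g x) (at x)"
        by (rule has_field_derivative_transform_within_open[where S="{r<..}"]) (use True in \<open>auto simp: \<Phi>_def\<close>)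
      then show ?thesis by (simp add: has_real_derivative_iff_has_vector_derivative)
    next
      case False
      then have xr: "x < r" using x by auto
      have "((\<lambda>v. 0) has_real_derivative g x) (at x)"
        using xr by (auto intro!: derivative_eq_intros simp: g_def)
      then have "(\<Phi> has_real_derivative g x) (at x)"
        by (rule has_field_derivative_transform_within_open[where S="{..<r}"]) (use xr in \<open>auto simp: \<Phi>_def\<close>)
      then show ?thesis by (simp add: has_real_derivative_iff_has_vector_derivative)
    qed
  qed (use t in auto)
  then have "integral {0..t} g = \<Phi> t - \<Phi> 0" by (rule integral_unique)
  moreover have "\<Phi> 0 = 0" using r by (simp add: \<Phi>_def)
  moreover have "l * \<Phi> t = (if r \<le> t then 1 - exp (- (t - r) * l) else 0)"
    using l by (auto simp: \<Phi>_def max_def)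
  ultimately show ?thesis using L by (simp add: g_def[symmetric])
qed

lemma (in prob_space) exponential_distributed_le:
  assumes D: "distributed M lborel T (exponential_density l)" and l: "0 < l"
  shows "prob {\<omega>\<in>space M. T \<omega> \<le> a} = (if 0 \<le> a then 1 - exp (- a * l) else 0)"
proof (cases "0 \<le> a")
  case True
  have "prob {\<omega>\<in>space M. T \<omega> \<le> a} = 1 - exp (- a * l)"
    by (rule exponential_distributedD_le[OF D True l])
  then show ?thesis using True by (simp only: if_True)
next
  case False
  have Tm[measurable]: "T \<in> borel_measurable M"
    using distributed_measurable[OF D] by simp
  have "prob {\<omega>\<in>space M. T \<omega> \<le> a} \<le> prob {\<omega>\<in>space M. T \<omega> \<le> 0}"
    using False by (intro finite_measure_mono) auto
  also have "\<dots> = 0" using exponential_distributedD_le[OF D _ l, of 0] by simp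
  finally show ?thesis using False measure_nonneg[of M] by (simp add: antisym)
qed

lemma (in prob_space) exponential_distributed_AE_nonneg:
  assumes D: "distributed M lborel T (exponential_density l)" and l: "0 < l"
  shows "AE \<omega> in M. 0 \<le> T \<omega>"
proof -
  have Tm[measurable]: "T \<in> borel_measurable M"
    using distributed_measurable[OF D] by simp
  have "prob {\<omega>\<in>space M. T \<omega> < 0} \<le> prob {\<omega>\<in>space M. T \<omega> \<le> 0}"
    by (intro finite_measure_mono) auto
  also have "\<dots> = 0" using exponential_distributedD_le[OF D _ l, of 0] by simp
  finally have "prob {\<omega>\<in>space M. T \<omega> < 0} = 0" using measure_nonneg[of M] by (simp add: antisym)
  then have "emeasure M {\<omega>\<in>space M. \<not> 0 \<le> T \<omega>} = 0"
    by (simp add: emeasure_eq_measure not_le)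
  then show ?thesis by (subst AE_iff_measurable[OF _ refl]) auto
qed

lemma (in prob_space) prob_sum_exponential_le:
  fixes R T :: "'a \<Rightarrow> real"
  assumes ind: "indep_var borel R borel T"
    and D: "distributed M lborel T (exponential_density l)" and l: "0 < l"
  shows "prob {\<omega>\<in>space M. R \<omega> + T \<omega> \<le> t}
       = expectation (\<lambda>\<omega>. if R \<omega> \<le> t then 1 - exp (- (t - R \<omega>) * l) else 0)"
proof -
  have [measurable]: "R \<in> borel_measurable M" "T \<in> borel_measurable M"
    using ind indep_var_rv1 indep_var_rv2 by auto
  have "prob {\<omega>\<in>space M. R \<omega> + T \<omega> \<le> t} = expectation (\<lambda>\<omega>. if R \<omega> + T \<omega> \<le> t then 1 else 0)"
    by (rule prob_eq_integral_if) measurable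
  also have "\<dots> = expectation (\<lambda>\<omega>. expectation (\<lambda>\<omega>'. if R \<omega> + T \<omega>' \<le> t then 1 else 0))"
    using indep_var_integral_iterated[OF ind, of "\<lambda>p. if fst p + snd p \<le> t then 1 else 0" 1] by simp
  also have "\<dots> = expectation (\<lambda>\<omega>. if R \<omega> \<le> t then 1 - exp (- (t - R \<omega>) * l) else 0)"
  proof (intro Bochner_Integration.integral_cong refl)
    fix \<omega>
    have "expectation (\<lambda>\<omega>'. if R \<omega> + T \<omega>' \<le> t then 1 else 0) = prob {\<omega>'\<in>space M. T \<omega>' \<le> t - R \<omega>}"
      by (subst prob_eq_integral_if) (auto intro!: Bochner_Integration.integral_cong simp: algebra_simps)
    then show "expectation (\<lambda>\<omega>'. if R \<omega> + T \<omega>' \<le> t then 1 else 0)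
        = (if R \<omega> \<le> t then 1 - exp (- (t - R \<omega>) * l) else 0)"
      using exponential_distributed_le[OF D l] by simp
  qed
  finally show ?thesis .
qed

lemma (in prob_space) prob_sum_exponential_gt:
  fixes R T :: "'a \<Rightarrow> real"
  assumes ind: "indep_var borel R borel T"
    and D: "distributed M lborel T (exponential_density l)" and l: "0 < l"
  shows "prob {\<omega>\<in>space M. R \<omega> \<le> v \<and> v < R \<omega> + T \<omega>}
       = expectation (\<lambda>\<omega>. if R \<omega> \<le> v then exp (- (v - R \<omega>) * l) else 0)"
proof -
  have [measurable]: "R \<in> borel_measurable M" "T \<in> borel_measurable M"
    using ind indep_var_rv1 indep_var_rv2 by auto
  have "prob {\<omega>\<in>space M. R \<omega> \<le> v \<and> v < R \<omega> + T \<omega>}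
      = expectation (\<lambda>\<omega>. if R \<omega> \<le> v \<and> v < R \<omega> + T \<omega> then 1 else 0)"
    by (rule prob_eq_integral_if) measurable
  also have "\<dots> = expectation (\<lambda>\<omega>. expectation (\<lambda>\<omega>'. if R \<omega> \<le> v \<and> v < R \<omega> + T \<omega>' then 1 else 0))"
    using indep_var_integral_iterated[OF ind, of "\<lambda>p. if fst p \<le> v \<and> v < fst p + snd p then 1 else 0" 1]
    by simp
  also have "\<dots> = expectation (\<lambda>\<omega>. if R \<omega> \<le> v then exp (- (v - R \<omega>) * l) else 0)"
  proof (intro Bochner_Integration.integral_cong refl)
    fix \<omega>
    show "expectation (\<lambda>\<omega>'. if R \<omega> \<le> v \<and> v < R \<omega> + T \<omega>' then 1 else 0)
        = (if R \<omega> \<le> v then exp (- (v - R \<omega>) * l) else 0)"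
    proof (cases "R \<omega> \<le> v")
      case True
      have "expectation (\<lambda>\<omega>'. if R \<omega> \<le> v \<and> v < R \<omega> + T \<omega>' then 1 else 0)
          = prob {\<omega>'\<in>space M. v - R \<omega> < T \<omega>'}"
        using True by (subst prob_eq_integral_if) (auto intro!: Bochner_Integration.integral_cong simp: algebra_simps)
      then show ?thesis
        using exponential_distributedD_gt[OF D _ l, of "v - R \<omega>"] True by simp
    qed simp
  qed
  finally show ?thesis .
qed

text \<open>Both sides equal \<open>\<bbbE>[1 - e\<^sup>-\<^sup>l\<^sup>(\<^sup>t\<^sup>-\<^sup>R\<^sup>); R \<le> t]\<close>; on the right this needs an exchange of
  the integrals.\<close>
lemma (in prob_space) exponential_sum_le_eq_integral:
  fixes R T :: "'a \<Rightarrow> real" and l t :: real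
  assumes ind: "indep_var borel R borel T"
    and D: "distributed M lborel T (exponential_density l)" and l: "0 < l"
    and Rpos: "AE \<omega> in M. 0 \<le> R \<omega>" and t: "0 \<le> t"
  shows "prob {\<omega>\<in>space M. R \<omega> + T \<omega> \<le> t}
         = l * (LBINT v=0..t. prob {\<omega>\<in>space M. R \<omega> \<le> v \<and> v < R \<omega> + T \<omega>})"
proof -
  have [measurable]: "R \<in> borel_measurable M"
    using ind indep_var_rv1 by auto
  define k where "k = (\<lambda>(\<omega>, v). if R \<omega> \<le> v then exp (- (v - R \<omega>) * l) else 0)"
  have km: "k \<in> borel_measurable (M \<Otimes>\<^sub>M lborel)"
    unfolding k_def by measurable
  have kb: "\<bar>k (\<omega>, v)\<bar> \<le> 1" for \<omega> v
    using l by (auto simp: k_def mult_le_0_iff)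
  have "prob {\<omega>\<in>space M. R \<omega> \<le> v \<and> v < R \<omega> + T \<omega>} = expectation (\<lambda>\<omega>. k (\<omega>, v))" for v
    by (simp add: prob_sum_exponential_gt[OF ind D l] k_def)
  then have "l * (LBINT v=0..t. prob {\<omega>\<in>space M. R \<omega> \<le> v \<and> v < R \<omega> + T \<omega>})
      = l * (LBINT v=0..t. expectation (\<lambda>\<omega>. k (\<omega>, v)))"
    by (simp only:)
  also have "\<dots> = expectation (\<lambda>\<omega>. l * (LBINT v=0..t. k (\<omega>, v)))"
    using Fubini_LBINT_bounded(1)[OF finite_measure_axioms km kb t] by simp
  also have "\<dots> = expectation (\<lambda>\<omega>. if R \<omega> \<le> t then 1 - exp (- (t - R \<omega>) * l) else 0)"
  proof (rule integral_cong_AE)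
    show "(\<lambda>\<omega>. l * (LBINT v=0..t. k (\<omega>, v))) \<in> borel_measurable M"
      using Fubini_LBINT_bounded(2)[OF finite_measure_axioms km kb t] by measurable
    show "AE \<omega> in M. l * (LBINT v=0..t. k (\<omega>, v)) = (if R \<omega> \<le> t then 1 - exp (- (t - R \<omega>) * l) else 0)"
      using Rpos by eventually_elim (simp add: k_def integral_shifted_exponential[OF _ l t])
  qed measurable
  finally show ?thesis
    using prob_sum_exponential_le[OF ind D l] by simp
qed

lemma (in prob_space) indep_var_sum_other:
  fixes X :: "'i \<Rightarrow> 'a \<Rightarrow> real"
  assumes I: "finite I" "i \<notin> I" and indep: "indep_vars (\<lambda>_. borel) X (insert i I)"
  shows "indep_var borel (\<lambda>\<omega>. \<Sum>i\<in>I. X i \<omega>) borel (X i)"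
proof -
  have "indep_var
    borel ((\<lambda>f. \<Sum>i\<in>I. f i) \<circ> (\<lambda>\<omega>. restrict (\<lambda>i. X i \<omega>) I))
    borel ((\<lambda>f. f i) \<circ> (\<lambda>\<omega>. restrict (\<lambda>i. X i \<omega>) {i}))"
    using I by (intro indep_var_compose[OF indep_var_restrict[OF indep]] ) auto
  also have "((\<lambda>f. f i) \<circ> (\<lambda>\<omega>. restrict (\<lambda>i. X i \<omega>) {i})) = X i"
    by auto
  also have "((\<lambda>f. \<Sum>i\<in>I. f i) \<circ> (\<lambda>\<omega>. restrict (\<lambda>i. X i \<omega>) I)) = (\<lambda>\<omega>. \<Sum>i\<in>I. X i \<omega>)"
    by (auto cong: rev_conj_cong)
  finally show ?thesis .
qed

lemma floor_grid_tendsto: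
  fixes u :: real
  shows "(\<lambda>n. real (nat \<lfloor>real (Suc n) * u\<rfloor>) / real (Suc n)) \<longlonglongrightarrow> max 0 u"
proof (cases "u \<le> 0")
  case True
  have "real (nat \<lfloor>real (Suc n) * u\<rfloor>) / real (Suc n) = 0" for n
  proof -
    have "real (Suc n) * u \<le> 0" using True by (simp add: mult_nonneg_nonpos)
    then have "\<lfloor>real (Suc n) * u\<rfloor> \<le> 0" by linarith
    then show ?thesis by simp
  qed
  then show ?thesis using True by simp
next
  case False
  then have u: "0 < u" by simp
  let ?q = "\<lambda>n. real (nat \<lfloor>real (Suc n) * u\<rfloor>) / real (Suc n)"
  have b: "u - 1 / real (Suc n) \<le> ?q n \<and> ?q n \<le> u" for n
  proof -
    have nn: "0 \<le> \<lfloor>real (Suc n) * u\<rfloor>" using u by simp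
    then have e: "real (nat \<lfloor>real (Suc n) * u\<rfloor>) = real_of_int \<lfloor>real (Suc n) * u\<rfloor>" by simp
    have f1: "real_of_int \<lfloor>real (Suc n) * u\<rfloor> \<le> real (Suc n) * u" by linarith
    have f2: "real (Suc n) * u - 1 \<le> real_of_int \<lfloor>real (Suc n) * u\<rfloor>" by linarith
    have pos: "0 < real (Suc n)" by simp
    obtain F N where F: "F = real_of_int \<lfloor>real (Suc n) * u\<rfloor>" and N: "N = real (Suc n)" by blast
    have f1': "F \<le> N * u" and f2': "N * u - 1 \<le> F" and pos': "0 < N" using f1 f2 F N by auto
    have "F / N \<le> u" using f1' pos' by (simp add: pos_divide_le_eq mult.commute)
    moreover have "u - 1 / N \<le> F / N"
    proof -
      have "u - 1 / N = (N * u - 1) / N" using pos' by (simp add: field_simps)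
      also have "\<dots> \<le> F / N" using f2' pos' by (intro divide_right_mono) auto
      finally show ?thesis .
    qed
    ultimately show ?thesis unfolding e F N by simp
  qed
  have l1: "(\<lambda>n. u - 1 / real (Suc n)) \<longlonglongrightarrow> u"
    using tendsto_diff[OF tendsto_const LIMSEQ_Suc[OF lim_1_over_n]] by simp
  have "?q \<longlonglongrightarrow> u"
    by (rule tendsto_sandwich[OF _ _ l1 tendsto_const]) (use b in auto)
  then show ?thesis using u by simp
qed

lemma borel_measurable_continuous_paths:
  fixes X :: "real \<Rightarrow> 'a \<Rightarrow> real" and M :: "'a measure"
  assumes meas: "\<And>t. 0 \<le> t \<Longrightarrow> X t \<in> borel_measurable M"
    and cont: "\<And>\<omega>. \<omega> \<in> space M \<Longrightarrow> continuous_on {0..} (\<lambda>t. X t \<omega>)"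
  shows "(\<lambda>p. X (max 0 (snd p)) (fst p)) \<in> borel_measurable (M \<Otimes>\<^sub>M lborel)"
proof (rule borel_measurable_LIMSEQ_real)
  let ?q = "\<lambda>n u. real (nat \<lfloor>real (Suc n) * u\<rfloor>) / real (Suc n)"
  fix n
  show "(\<lambda>p. X (?q n (snd p)) (fst p)) \<in> borel_measurable (M \<Otimes>\<^sub>M lborel)"
  proof (rule measurable_compose_countable'[where I=UNIV and f="\<lambda>i p. X (real i / real (Suc n)) (fst p)"
        and g="\<lambda>p. nat \<lfloor>real (Suc n) * snd p\<rfloor>"])
    fix i :: nat
    show "(\<lambda>p. X (real i / real (Suc n)) (fst p)) \<in> borel_measurable (M \<Otimes>\<^sub>M lborel)"
      using meas[of "real i / real (Suc n)"] by (intro measurable_compose[OF measurable_fst]) auto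
  next
    have "(\<lambda>p. \<lfloor>real (Suc n) * snd p\<rfloor>) \<in> (M \<Otimes>\<^sub>M lborel) \<rightarrow>\<^sub>M count_space UNIV"
      by (rule measurable_compose[OF _ measurable_real_floor]) measurable
    then show "(\<lambda>p. nat \<lfloor>real (Suc n) * snd p\<rfloor>) \<in> (M \<Otimes>\<^sub>M lborel) \<rightarrow>\<^sub>M count_space UNIV"
      by (rule measurable_compose) simp
  qed simp
next
  let ?q = "\<lambda>n u. real (nat \<lfloor>real (Suc n) * u\<rfloor>) / real (Suc n)"
  fix p :: "'a \<times> real" assume p: "p \<in> space (M \<Otimes>\<^sub>M lborel)"
  then have "fst p \<in> space M" by (auto simp: space_pair_measure)
  then have c: "continuous_on {0..} (\<lambda>t. X t (fst p))" by (rule cont)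
  show "(\<lambda>n. X (?q n (snd p)) (fst p)) \<longlonglongrightarrow> X (max 0 (snd p)) (fst p)"
    by (rule continuous_on_tendsto_compose[OF c floor_grid_tendsto]) auto
qed

lemma sum_first_twice:
  fixes f :: "nat \<Rightarrow> real"
  assumes "2 \<le> m"
  shows "(\<Sum>k=1..<m. (if k = 1 then 2 else 1) * f k) = f 1 + (\<Sum>k=1..<m. f k)"
proof -
  have "(\<Sum>k=1..<m. (if k = 1 then 2 else 1) * f k) = (\<Sum>k=1..<m. f k + (if k = 1 then f k else 0))"
    by (intro sum.cong) auto
  also have "\<dots> = (\<Sum>k=1..<m. f k) + f 1"
    using assms by (simp add: sum.distrib sum.delta)
  finally show ?thesis by simp
qed

section \<open>Kingman's coalescent\<close>

locale kingman =
  fixes Mk :: "'b measure" and T :: "nat \<Rightarrow> 'b \<Rightarrow> real" and m :: nat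
  assumes kingman_times: "kingman_times Mk T m" and m_ge_2: "2 \<le> m"
begin

sublocale prob_space Mk
  using kingman_times by (simp add: kingman_times_def)

lemma indep_vars_T: "indep_vars (\<lambda>_. borel) T {2..m}"
  using kingman_times by (simp add: kingman_times_def)

lemma distributed_T: "j \<in> {2..m} \<Longrightarrow> distributed Mk lborel (T j) (exponential_density (coal_rate j))"
  using kingman_times by (simp add: kingman_times_def coal_rate_def)

lemma measurable_T [measurable]: "j \<in> {2..m} \<Longrightarrow> T j \<in> borel_measurable Mk"
  using distributed_measurable[OF distributed_T] by simp

lemma AE_T_nonneg: "AE \<omega> in Mk. \<forall>j\<in>{2..m}. 0 \<le> T j \<omega>"
  by (intro AE_finite_allI exponential_distributed_AE_nonneg[OF distributed_T])
    (auto intro: coal_rate_pos)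

text \<open>\<open>A\<^sub>u > k\<close> holds exactly when \<open>u < level_time k\<close>, so \<open>tail k u\<close> is \<open>\<bbbP>(A\<^sub>u > k)\<close>.\<close>
definition level_time :: "nat \<Rightarrow> 'b \<Rightarrow> real" where
  "level_time k \<omega> = (\<Sum>j\<in>{k<..m}. T j \<omega>)"

definition tail :: "nat \<Rightarrow> real \<Rightarrow> real" where
  "tail k u = prob {\<omega>\<in>space Mk. u < level_time k \<omega>}"

lemma measurable_level_time [measurable]: "1 \<le> k \<Longrightarrow> level_time k \<in> borel_measurable Mk"
  unfolding level_time_def by (intro borel_measurable_sum measurable_T) auto

lemma tail_nonneg: "0 \<le> tail k u"
  and tail_le_1: "tail k u \<le> 1"
  by (simp_all add: tail_def)

lemma abs_tail_le_1: "\<bar>tail k u\<bar> \<le> 1"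
  using tail_nonneg tail_le_1 by (simp add: abs_le_iff)

lemma tail_antimono: "1 \<le> k \<Longrightarrow> u \<le> u' \<Longrightarrow> tail k u' \<le> tail k u"
  unfolding tail_def by (intro finite_measure_mono) auto

lemma borel_measurable_tail [measurable]: "1 \<le> k \<Longrightarrow> tail k \<in> borel_measurable borel"
proof -
  assume "1 \<le> k"
  then have "mono (\<lambda>u. - tail k u)"
    using tail_antimono by (auto simp: mono_def)
  then have "(\<lambda>u. - (- tail k u)) \<in> borel_measurable borel"
    by (intro borel_measurable_uminus borel_measurable_mono)
  then show ?thesis by simp
qed

lemma tail_m: "0 \<le> u \<Longrightarrow> tail m u = 0"
  by (simp add: tail_def level_time_def not_less)

lemma level_time_Suc:
  "k < m \<Longrightarrow> level_time k \<omega> = T (Suc k) \<omega> + level_time (Suc k) \<omega>"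
proof -
  assume "k < m"
  then have "{k<..m} = insert (Suc k) {Suc k<..m}" by auto
  then show ?thesis unfolding level_time_def by simp
qed

lemma tail_diff_eq_prob:
  assumes k: "k \<in> {1..<m}"
  shows "tail k v - tail (Suc k) v
       = prob {\<omega>\<in>space Mk. level_time (Suc k) \<omega> \<le> v \<and> v < level_time (Suc k) \<omega> + T (Suc k) \<omega>}"
proof -
  let ?R = "level_time (Suc k)" and ?S = "T (Suc k)"
  have [measurable]: "?R \<in> borel_measurable Mk" "?S \<in> borel_measurable Mk"
    "level_time k \<in> borel_measurable Mk"
    using k by auto
  have "tail k v = prob ({\<omega>\<in>space Mk. ?R \<omega> \<le> v \<and> v < ?R \<omega> + ?S \<omega>}
                        \<union> {\<omega>\<in>space Mk. v < ?R \<omega> \<and> v < level_time k \<omega>})"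
    unfolding tail_def using k by (intro arg_cong[where f=prob]) (auto simp: level_time_Suc)
  also have "\<dots> = prob {\<omega>\<in>space Mk. ?R \<omega> \<le> v \<and> v < ?R \<omega> + ?S \<omega>}
                + prob {\<omega>\<in>space Mk. v < ?R \<omega> \<and> v < level_time k \<omega>}"
    by (intro finite_measure_Union) auto
  also have "prob {\<omega>\<in>space Mk. v < ?R \<omega> \<and> v < level_time k \<omega>} = tail (Suc k) v"
  proof -
    have "AE \<omega> in Mk. (\<omega> \<in> {\<omega>\<in>space Mk. v < ?R \<omega> \<and> v < level_time k \<omega>})
                     = (\<omega> \<in> {\<omega>\<in>space Mk. v < ?R \<omega>})"
      using AE_T_nonneg
    proof eventually_elim
      case (elim \<omega>)
      then have "0 \<le> T (Suc k) \<omega>" using k by auto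
      then show ?case using k by (auto simp: level_time_Suc)
    qed
    then show ?thesis unfolding tail_def by (intro finite_measure_eq_AE) auto
  qed
  finally show ?thesis by simp
qed

text \<open>Kolmogorov's backward equation for the tails: the coalescent leaves level \<open>k + 1\<close> after an
  exponential time of rate \<open>\<lambda>\<^sub>k\<^sub>+\<^sub>1\<close>, independent of the time it needs to get there.\<close>
lemma one_minus_tail:
  assumes k: "k \<in> {1..<m}" and u: "0 \<le> u"
  shows "1 - tail k u = coal_rate (Suc k) * (LBINT v=0..u. tail k v - tail (Suc k) v)"
proof -
  let ?R = "level_time (Suc k)" and ?S = "T (Suc k)"
  have sk: "Suc k \<in> {2..m}" using k by auto
  have [measurable]: "level_time k \<in> borel_measurable Mk"
    using k by auto
  have ind: "indep_var borel ?R borel ?S"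
    unfolding level_time_def
    by (rule indep_var_sum_other) (use k in \<open>auto intro!: indep_vars_subset[OF indep_vars_T]\<close>)
  have Rpos: "AE \<omega> in Mk. 0 \<le> ?R \<omega>"
    using AE_T_nonneg by eventually_elim (auto simp: level_time_def intro!: sum_nonneg)
  have "1 - tail k u = prob {\<omega>\<in>space Mk. ?R \<omega> + ?S \<omega> \<le> u}"
  proof -
    have "{\<omega>\<in>space Mk. ?R \<omega> + ?S \<omega> \<le> u} = space Mk - {\<omega>\<in>space Mk. u < level_time k \<omega>}"
      using k by (auto simp: level_time_Suc)
    then show ?thesis unfolding tail_def by (simp add: prob_compl)
  qed
  also have "\<dots> = coal_rate (Suc k) * (LBINT v=0..u. prob {\<omega>\<in>space Mk. ?R \<omega> \<le> v \<and> v < ?R \<omega> + ?S \<omega>})"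
    using coal_rate_pos[of "Suc k"] sk
    by (intro exponential_sum_le_eq_integral[OF ind distributed_T[OF sk] _ Rpos u]) auto
  finally show ?thesis
    by (simp add: tail_diff_eq_prob[OF k])
qed

lemma tail_0: "k \<in> {1..<m} \<Longrightarrow> tail k 0 = 1"
  using one_minus_tail[of k 0] by (simp add: zero_ereal_def)

lemma tail_integral_equation:
  assumes "k \<in> {1..<m}" "0 \<le> s"
  shows "tail k s = tail k 0 + (LBINT v=0..s. - coal_rate (Suc k) * (tail k v - tail (Suc k) v))"
  using one_minus_tail[OF assms] tail_0[OF assms(1)]
  by (simp add: interval_lebesgue_integral_mult_right interval_lebesgue_integral_uminus)

lemma tail_derivative_bounded:
  "\<bar>- coal_rate (Suc k) * (tail k v - tail (Suc k) v)\<bar> \<le> coal_rate (Suc k)"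
proof -
  have "\<bar>tail k v - tail (Suc k) v\<bar> \<le> 1"
    using tail_nonneg[of k v] tail_le_1[of k v] tail_nonneg[of "Suc k" v] tail_le_1[of "Suc k" v]
    by linarith
  then show ?thesis
    using coal_rate_nonneg[of "Suc k"] by (simp add: abs_mult mult_left_le)
qed

lemma borel_measurable_tail_derivative:
  "1 \<le> k \<Longrightarrow> (\<lambda>v. - coal_rate (Suc k) * (tail k v - tail (Suc k) v)) \<in> borel_measurable borel"
  by (intro borel_measurable_times borel_measurable_diff borel_measurable_const borel_measurable_tail) auto

lemma tail_continuous_on:
  assumes "k \<in> {1..m}"
  shows "continuous_on {0..t} (tail k)"
proof (cases "k = m")
  case True
  then show ?thesis
    using tail_m continuous_on_const[of "{0..t}" "0::real"]
    by (metis (no_types, lifting) atLeastAtMost_iff continuous_on_cong)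
next
  case False
  with assms have k: "k \<in> {1..<m}" by auto
  show ?thesis
    by (rule integral_equation_continuous_on[OF tail_integral_equation[OF k]
          borel_measurable_tail_derivative tail_derivative_bounded]) (use k in auto)
qed

lemma tail_has_derivative:
  assumes k: "k \<in> {1..<m}" and u: "u \<in> {0..t}"
  shows "(tail k has_real_derivative (- coal_rate (Suc k) * (tail k u - tail (Suc k) u)))
           (at u within {0..t})"
proof (rule integral_equation_has_derivative[OF tail_integral_equation[OF k]
      borel_measurable_tail_derivative tail_derivative_bounded _ u])
  show "continuous_on {0..t} (\<lambda>v. - coal_rate (Suc k) * (tail k v - tail (Suc k) v))"
    using tail_continuous_on[of k] tail_continuous_on[of "Suc k"] k by (intro continuous_intros) auto
qed (use k in auto)

lemma tail_integrable_on: "1 \<le> k \<Longrightarrow> 0 \<le> t \<Longrightarrow> tail k integrable_on {0..t}"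
  using LBINT_eq_integral_bounded(2)[of t "tail k" 1] abs_tail_le_1 by auto

text \<open>For \<open>\<mu>\<^sub>k(u) = \<bbbE>\<^sub>x[\<xi>\<^sub>u\<^sup>k]\<close> this is the moment duality \<open>\<bbbE>\<^sub>x[\<xi>\<^sub>t\<^sup>m] = \<bbbE>\<^sub>m[x\<^sup>A\<^sup>\<^sub>t]\<close>.\<close>
lemma transport_by_tail:
  fixes \<mu> :: "nat \<Rightarrow> real \<Rightarrow> real"
  assumes t: "0 \<le> t"
    and d\<mu>: "\<And>k u. k \<in> {1..m} \<Longrightarrow> u \<in> {0..t} \<Longrightarrow>
      (\<mu> k has_real_derivative (coal_rate k * (\<mu> (k - 1) u - \<mu> k u))) (at u within {0..t})"
  shows "\<mu> m t = \<mu> 1 0 + (\<Sum>k=1..<m. tail k t * (\<mu> (Suc k) 0 - \<mu> k 0))"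
  using m_ge_2 by (intro triangular_duality[OF t _ _ tail_0 tail_has_derivative d\<mu>]) (auto simp: tail_m)

lemma spectral_sum_eq_tail_sum:
  assumes "0 \<le> t"
  shows "spectral_sum m m t = (\<Sum>k=1..<m. (if k = 1 then 2 else 1) * tail k t)"
proof -
  have "spectral_sum m m t
      = spectral_sum m 1 0 + (\<Sum>k=1..<m. tail k t * (spectral_sum m (Suc k) 0 - spectral_sum m k 0))"
    using assms by (intro transport_by_tail spectral_sum_has_derivative) auto
  moreover have "spectral_sum m 1 0 = 0"
    using spectral_sum_0[of 1 m] m_ge_2 by simp
  moreover have "spectral_sum m (Suc k) 0 - spectral_sum m k 0 = (if k = 1 then 2 else 1)"
    if "k \<in> {1..<m}" for k
    using spectral_sum_0[of k m] spectral_sum_0[of "Suc k" m] that by auto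
  ultimately show ?thesis by (simp add: mult.commute)
qed

lemma level_time_antimono:
  assumes "\<forall>j\<in>{2..m}. 0 \<le> T j \<omega>" "1 \<le> k" "k \<le> k'"
  shows "level_time k' \<omega> \<le> level_time k \<omega>"
  unfolding level_time_def using assms by (intro sum_mono2) auto

lemma kingman_state_eq:
  assumes u: "0 \<le> u" and pos: "\<forall>j\<in>{2..m}. 0 \<le> T j \<omega>"
  shows "real (kingman_state m T u \<omega>) = 1 + (\<Sum>k=1..<m. if u < level_time k \<omega> then 1 else 0)"
    and "kingman_state m T u \<omega> = 1 \<longleftrightarrow> \<not> u < level_time 1 \<omega>"
proof -
  define P where "P k = (1 \<le> k \<and> level_time k \<omega> \<le> u)" for k
  define a where "a = (LEAST k. P k)"
  have A: "kingman_state m T u \<omega> = a"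
    unfolding kingman_state_def a_def P_def level_time_def ..
  have Pm: "P m" using m_ge_2 u by (simp add: P_def level_time_def)
  have Pa: "P a" unfolding a_def using Pm by (rule LeastI)
  have am: "a \<le> m" unfolding a_def using Pm by (rule Least_le)
  have nP: "\<not> P k" if "k < a" for k using that unfolding a_def by (rule not_less_Least)
  have S: "{k\<in>{1..<m}. u < level_time k \<omega>} = {1..<a}"
  proof (intro set_eqI iffI)
    fix k assume "k \<in> {k\<in>{1..<m}. u < level_time k \<omega>}"
    then have k: "1 \<le> k" "k < m" "u < level_time k \<omega>" by auto
    have "k < a"
    proof (rule ccontr)
      assume "\<not> k < a"
      then have "level_time k \<omega> \<le> level_time a \<omega>"
        using level_time_antimono[OF pos, of a k] Pa by (auto simp: P_def)
      then show False using Pa k by (auto simp: P_def)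
    qed
    then show "k \<in> {1..<a}" using k by auto
  next
    fix k assume "k \<in> {1..<a}"
    then show "k \<in> {k\<in>{1..<m}. u < level_time k \<omega>}" using nP[of k] am by (auto simp: P_def)
  qed
  have a1: "1 \<le> a" using Pa by (simp add: P_def)
  have "(\<Sum>k=1..<m. if u < level_time k \<omega> then 1 else 0 :: real)
      = real (card {k\<in>{1..<m}. u < level_time k \<omega>})"
    using sum.inter_filter[of "{1..<m}" "\<lambda>_. 1::real" "\<lambda>k. u < level_time k \<omega>"] by simp
  also have "\<dots> = real (a - 1)" unfolding S by simp
  finally show "real (kingman_state m T u \<omega>) = 1 + (\<Sum>k=1..<m. if u < level_time k \<omega> then 1 else 0)"
    using a1 A by simp
  have "u < level_time 1 \<omega> \<longleftrightarrow> 1 \<in> {k\<in>{1..<m}. u < level_time k \<omega>}" using m_ge_2 by auto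
  also have "\<dots> \<longleftrightarrow> 1 < a" unfolding S by auto
  finally show "kingman_state m T u \<omega> = 1 \<longleftrightarrow> \<not> u < level_time 1 \<omega>"
    using a1 A by auto
qed

lemma measurable_kingman_state [measurable]:
  "(\<lambda>\<omega>. kingman_state m T u \<omega>) \<in> measurable Mk (count_space UNIV)"
  unfolding kingman_state_def
proof (rule measurable_Least)
  fix k
  show "Measurable.pred Mk (\<lambda>\<omega>. 1 \<le> k \<and> (\<Sum>j\<in>{k<..m}. T j \<omega>) \<le> u)"
  proof (cases "k = 0")
    case False
    then show ?thesis unfolding level_time_def[symmetric] by measurable
  qed simp
qed

lemma expectation_kingman_state:
  assumes u: "0 \<le> u"
  shows "expectation (\<lambda>\<omega>. real (kingman_state m T u \<omega>)) = 1 + (\<Sum>k=1..<m. tail k u)"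
proof -
  have [measurable]: "level_time k \<in> borel_measurable Mk" if "k \<in> {1..<m}" for k
    using that by simp
  have int: "integrable Mk (\<lambda>\<omega>. if u < level_time k \<omega> then 1 else 0 :: real)" if "k \<in> {1..<m}" for k
    using that by (intro integrable_const_bound[where B=1]) auto
  have "expectation (\<lambda>\<omega>. real (kingman_state m T u \<omega>))
      = expectation (\<lambda>\<omega>. 1 + (\<Sum>k=1..<m. if u < level_time k \<omega> then 1 else 0))"
  proof (rule integral_cong_AE)
    show "AE \<omega> in Mk. real (kingman_state m T u \<omega>)
        = 1 + (\<Sum>k=1..<m. if u < level_time k \<omega> then 1 else 0)"
      using AE_T_nonneg by eventually_elim (rule kingman_state_eq(1)[OF u])
  qed measurable
  also have "\<dots> = 1 + (\<Sum>k=1..<m. expectation (\<lambda>\<omega>. if u < level_time k \<omega> then 1 else 0))"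
  proof -
    have "integrable Mk (\<lambda>\<omega>. \<Sum>k=1..<m. if u < level_time k \<omega> then 1 else 0 :: real)"
      using int by (intro Bochner_Integration.integrable_sum) auto
    then show ?thesis
      using int by (simp add: Bochner_Integration.integral_add Bochner_Integration.integral_sum prob_space)
  qed
  also have "\<dots> = 1 + (\<Sum>k=1..<m. tail k u)"
    unfolding tail_def by (intro arg_cong2[where f="(+)"] sum.cong refl prob_eq_integral_if[symmetric]) auto
  finally show ?thesis .
qed

lemma prob_kingman_state_1:
  assumes u: "0 \<le> u"
  shows "prob {\<omega>\<in>space Mk. kingman_state m T u \<omega> = 1} = 1 - tail 1 u"
proof -
  have "prob {\<omega>\<in>space Mk. kingman_state m T u \<omega> = 1}
      = prob (space Mk - {\<omega>\<in>space Mk. u < level_time 1 \<omega>})"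
  proof (rule finite_measure_eq_AE)
    show "AE \<omega> in Mk. (\<omega> \<in> {\<omega>\<in>space Mk. kingman_state m T u \<omega> = 1})
        = (\<omega> \<in> space Mk - {\<omega>\<in>space Mk. u < level_time 1 \<omega>})"
      using AE_T_nonneg by eventually_elim (use kingman_state_eq(2)[OF u] in auto)
  qed measurable
  then show ?thesis unfolding tail_def by (simp add: prob_compl)
qed

lemma expected_state_minus_prob_1:
  assumes "0 \<le> u"
  shows "expectation (\<lambda>\<omega>. real (kingman_state m T u \<omega>))
           - prob {\<omega>\<in>space Mk. kingman_state m T u \<omega> = 1}
         = (\<Sum>k=1..<m. (if k = 1 then 2 else 1) * tail k u)"
  using expectation_kingman_state[OF assms] prob_kingman_state_1[OF assms] sum_first_twice[OF m_ge_2]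
  by simp

lemma interval_integral_tail_sum:
  assumes t: "0 \<le> t"
  shows "(LBINT u=0..t. (\<Sum>k=1..<m. c k * tail k u)) = (\<Sum>k=1..<m. c k * integral {0..t} (tail k))"
proof -
  have "(LBINT u=0..t. (\<Sum>k=1..<m. c k * tail k u)) = integral {0..t} (\<lambda>u. \<Sum>k=1..<m. c k * tail k u)"
  proof (rule LBINT_eq_integral_bounded(1)[OF t])
    show "(\<lambda>u. \<Sum>k=1..<m. c k * tail k u) \<in> borel_measurable borel"
      by measurable
    show "\<bar>\<Sum>k=1..<m. c k * tail k u\<bar> \<le> (\<Sum>k=1..<m. \<bar>c k\<bar>)" for u
    proof (intro order.trans[OF sum_abs] sum_mono)
      show "\<bar>c k * tail k u\<bar> \<le> \<bar>c k\<bar>" for k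
        using abs_tail_le_1[of k u] by (simp add: abs_mult mult_left_le)
    qed
  qed
  also have "\<dots> = (\<Sum>k=1..<m. integral {0..t} (\<lambda>u. c k * tail k u))"
    using t by (intro integral_sum integrable_on_mult_right tail_integrable_on) auto
  also have "\<dots> = (\<Sum>k=1..<m. c k * integral {0..t} (tail k))"
    by (simp add: integral_mult_right)
  finally show ?thesis .
qed

lemma interval_integral_expected_state_minus_prob_1:
  assumes t: "0 \<le> t"
  shows "(LBINT u=0..t. expectation (\<lambda>\<omega>. real (kingman_state m T u \<omega>))
                          - prob {\<omega>\<in>space Mk. kingman_state m T u \<omega> = 1})
         = (\<Sum>k=1..<m. (if k = 1 then 2 else 1) * integral {0..t} (tail k))"
proof -
  have "(LBINT u=0..t. expectation (\<lambda>\<omega>. real (kingman_state m T u \<omega>))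
                          - prob {\<omega>\<in>space Mk. kingman_state m T u \<omega> = 1})
      = (LBINT u=0..t. (\<Sum>k=1..<m. (if k = 1 then 2 else 1) * tail k u))"
    by (intro interval_integral_cong_nonneg[OF t] expected_state_minus_prob_1)
  also have "\<dots> = (\<Sum>k=1..<m. (if k = 1 then 2 else 1) * integral {0..t} (tail k))"
    by (rule interval_integral_tail_sum[OF t])
  finally show ?thesis .
qed

lemma interval_integral_expected_state_minus_prob_1_closed_form:
  assumes t: "0 \<le> t"
  shows "(LBINT u=0..t. expectation (\<lambda>\<omega>. real (kingman_state m T u \<omega>))
                          - prob {\<omega>\<in>space Mk. kingman_state m T u \<omega> = 1})
         = (\<Sum>k=2..m. (1 + (-1) ^ k) * (1 - exp (- real (k choose 2) * t))
                 * (2 * real k - 1) / real (k choose 2)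
                 * (Gamma (real m + 1) / Gamma (real m - real k + 1))
                 / (Gamma (real m + real k) / Gamma (real m)))"
proof -
  have "(LBINT u=0..t. expectation (\<lambda>\<omega>. real (kingman_state m T u \<omega>))
                          - prob {\<omega>\<in>space Mk. kingman_state m T u \<omega> = 1})
      = (LBINT u=0..t. spectral_sum m m u)"
    using expected_state_minus_prob_1 spectral_sum_eq_tail_sum
    by (intro interval_integral_cong_nonneg[OF t]) simp
  also have "\<dots> = (\<Sum>k=2..m. spectral_coeff k (real m) * (1 - exp (- coal_rate k * t)) / coal_rate k)"
    by (rule interval_integral_spectral_sum[OF t])
  also have "\<dots> = (\<Sum>k=2..m. (1 + (-1) ^ k) * (1 - exp (- real (k choose 2) * t))
                 * (2 * real k - 1) / real (k choose 2)
                 * (Gamma (real m + 1) / Gamma (real m - real k + 1))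
                 / (Gamma (real m + real k) / Gamma (real m)))"
    using Gamma_ratio_eq_fr_ratio m_ge_2
    by (intro sum.cong refl) (simp add: spectral_coeff_def coal_rate_def divide_inverse mult_ac)
  finally show ?thesis .
qed

end

section \<open>The neutral Wright--Fisher diffusion\<close>

lemma natural_events_reflect:
  "natural_events M (\<lambda>t \<omega>. 1 - X t \<omega>) s = natural_events M X s"
proof -
  have flip: "(\<lambda>y::real. 1 - y) -` A \<in> sets borel" if "A \<in> sets borel" for A
    using measurable_sets[of "\<lambda>y::real. 1 - y" borel borel A] that by simp
  have "{(\<lambda>\<omega>. 1 - X r \<omega>) -` A \<inter> space M | A. A \<in> sets borel} = {X r -` A \<inter> space M | A. A \<in> sets borel}"
    for r
  proof (intro set_eqI iffI; elim CollectE exE conjE)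
    fix E A assume "E = (\<lambda>\<omega>. 1 - X r \<omega>) -` A \<inter> space M" "A \<in> sets borel"
    then show "E \<in> {X r -` A \<inter> space M | A. A \<in> sets borel}"
      using flip by (intro CollectI exI[of _ "(\<lambda>y. 1 - y) -` A"]) auto
  next
    fix E A assume "E = X r -` A \<inter> space M" "A \<in> sets borel"
    then show "E \<in> {(\<lambda>\<omega>. 1 - X r \<omega>) -` A \<inter> space M | A. A \<in> sets borel}"
      using flip by (intro CollectI exI[of _ "(\<lambda>y. 1 - y) -` A"]) auto
  qed
  then show ?thesis unfolding natural_events_def by simp
qed

lemma WF_generator_power:
  fixes y :: real
  shows "y * (1 - y) / 2 * (real k * real (k - 1) * y ^ (k - 2)) = coal_rate k * (y ^ (k - 1) - y ^ k)"
proof (cases "k < 2")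
  case True
  then have "k = 0 \<or> k = 1" by auto
  then show ?thesis by (auto simp: coal_rate_def)
next
  case False
  then obtain j where k: "k = j + 2" by (metis add.commute le_add_diff_inverse not_less)
  have "coal_rate k * (y ^ (k - 1) - y ^ k) = real (j + 2) * real (j + 1) / 2 * (y ^ j * (y * (1 - y)))"
    unfolding k by (simp add: coal_rate_eq algebra_simps)
  also have "\<dots> = y * (1 - y) / 2 * (real k * real (k - 1) * y ^ (k - 2))"
    unfolding k by (simp add: field_simps)
  finally show ?thesis ..
qed

locale neutral_WF =
  fixes M :: "'a measure" and X :: "real \<Rightarrow> 'a \<Rightarrow> real" and x :: real
  assumes is_neutral_WF: "is_neutral_WF M X x"
begin

sublocale prob_space M
  using is_neutral_WF by (simp add: is_neutral_WF_def)

lemma measurable_X: "0 \<le> t \<Longrightarrow> X t \<in> borel_measurable M"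
  using is_neutral_WF by (simp add: is_neutral_WF_def)

lemma X_0: "\<omega> \<in> space M \<Longrightarrow> X 0 \<omega> = x"
  using is_neutral_WF by (simp add: is_neutral_WF_def)

lemma continuous_on_X: "\<omega> \<in> space M \<Longrightarrow> continuous_on {0..} (\<lambda>t. X t \<omega>)"
  using is_neutral_WF by (simp add: is_neutral_WF_def)

lemma X_in_unit: "\<omega> \<in> space M \<Longrightarrow> 0 \<le> t \<Longrightarrow> X t \<omega> \<in> {0..1}"
  using is_neutral_WF by (simp add: is_neutral_WF_def)

lemma martingale_problem:
  assumes "\<And>y. (f has_real_derivative f' y) (at y)" "\<And>y. (f' has_real_derivative f'' y) (at y)"
    and "continuous_on UNIV f''" "0 \<le> s" "s \<le> t" "B \<in> natural_events M X s"
  shows "integral\<^sup>L M (\<lambda>\<omega>. indicator B \<omega> * (f (X t \<omega>) - f (X s \<omega>)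
           - (LBINT u=s..t. X u \<omega> * (1 - X u \<omega>) / 2 * f'' (X u \<omega>)))) = 0"
  using is_neutral_WF assms unfolding is_neutral_WF_def by blast

text \<open>The generator \<open>\<frac>1\<^sub>2 y (1 - y) f''(y)\<close> is invariant under \<open>y \<mapsto> 1 - y\<close>.\<close>
lemma is_neutral_WF_reflect: "is_neutral_WF M (\<lambda>t \<omega>. 1 - X t \<omega>) (1 - x)"
  unfolding is_neutral_WF_def
proof (intro conjI allI impI ballI)
  show "prob_space M" by (rule prob_space_axioms)
  show "(\<lambda>\<omega>. 1 - X t \<omega>) \<in> borel_measurable M" if "0 \<le> t" for t
    using measurable_X[OF that] by measurable
  fix \<omega> assume \<omega>: "\<omega> \<in> space M"
  show "1 - X 0 \<omega> = 1 - x" using X_0[OF \<omega>] by simp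
  show "continuous_on {0..} (\<lambda>t. 1 - X t \<omega>)"
    using continuous_on_X[OF \<omega>] by (intro continuous_intros)
  show "1 - X t \<omega> \<in> {0..1}" if "0 \<le> t" for t
    using X_in_unit[OF \<omega> that] by simp
next
  fix f f' f'' :: "real \<Rightarrow> real" and s t :: real and B
  assume f: "(\<forall>y. (f has_real_derivative f' y) (at y)) \<and> (\<forall>y. (f' has_real_derivative f'' y) (at y))
      \<and> continuous_on UNIV f''"
    and st: "0 \<le> s \<and> s \<le> t" and B: "B \<in> natural_events M (\<lambda>t \<omega>. 1 - X t \<omega>) s"
  have neg: "((\<lambda>y. 1 - y) has_real_derivative -1) (at y)" for y :: real
    by (auto intro!: derivative_eq_intros)
  have "((\<lambda>y. f (1 - y)) has_real_derivative - f' (1 - y)) (at y)"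
    and "((\<lambda>y. - f' (1 - y)) has_real_derivative f'' (1 - y)) (at y)" for y
    using DERIV_chain2[OF _ neg, where f=f and Da="f' (1 - y)"]
      DERIV_minus[OF DERIV_chain2[OF _ neg, where f=f' and Da="f'' (1 - y)"]] f
    by simp_all
  moreover have "continuous_on UNIV (\<lambda>y. f'' (1 - y))"
    using f continuous_on_compose2[of UNIV f'' UNIV "\<lambda>y. 1 - y"] by (simp add: continuous_on_diff)
  ultimately have "integral\<^sup>L M (\<lambda>\<omega>. indicator B \<omega> * (f (1 - X t \<omega>) - f (1 - X s \<omega>)
      - (LBINT u=s..t. X u \<omega> * (1 - X u \<omega>) / 2 * f'' (1 - X u \<omega>)))) = 0"
    using st B martingale_problem[where f="\<lambda>y. f (1 - y)" and f'="\<lambda>y. - f' (1 - y)"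
        and f''="\<lambda>y. f'' (1 - y)"]
    by (simp add: natural_events_reflect)
  then show "integral\<^sup>L M (\<lambda>\<omega>. indicator B \<omega> * (f (1 - X t \<omega>) - f (1 - X s \<omega>)
      - (LBINT u=s..t. (1 - X u \<omega>) * (1 - (1 - X u \<omega>)) / 2 * f'' (1 - X u \<omega>)))) = 0"
    by (simp add: mult.commute)
qed

text \<open>The path as a function of \<open>(\<omega>, u)\<close>, frozen at \<open>X\<^sub>0\<close> for negative times so that it is
  defined (and jointly measurable) on all of \<open>\<Omega> \<times> \<real>\<close>.\<close>
definition path :: "'a \<times> real \<Rightarrow> real" where
  "path p = X (max 0 (snd p)) (fst p)"

lemma measurable_path [measurable]: "path \<in> borel_measurable (M \<Otimes>\<^sub>M lborel)"
  unfolding path_def by (rule borel_measurable_continuous_paths[OF measurable_X continuous_on_X])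

lemma measurable_path_at [measurable]: "(\<lambda>\<omega>. path (\<omega>, u)) \<in> borel_measurable M"
  unfolding path_def using measurable_X[of "max 0 u"] by simp

lemma path_in_unit: "\<omega> \<in> space M \<Longrightarrow> path (\<omega>, u) \<in> {0..1}"
  unfolding path_def by (intro X_in_unit) auto

lemma path_nonneg: "0 \<le> u \<Longrightarrow> path (\<omega>, u) = X u \<omega>"
  by (simp add: path_def)

lemma dynkin_formula:
  fixes f f' f'' :: "real \<Rightarrow> real" and s C :: real
  assumes d1: "\<And>y. (f has_real_derivative f' y) (at y)"
    and d2: "\<And>y. (f' has_real_derivative f'' y) (at y)"
    and c2: "continuous_on UNIV f''"
    and s: "0 \<le> s"
    and bf: "\<And>y. y \<in> {0..1} \<Longrightarrow> \<bar>f y\<bar> \<le> C"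
    and bh: "\<And>y. y \<in> {0..1} \<Longrightarrow> \<bar>y * (1 - y) / 2 * f'' y\<bar> \<le> C"
  shows "expectation (\<lambda>\<omega>. f (X s \<omega>))
       = f x + (LBINT u=0..s. expectation (\<lambda>\<omega>. path (\<omega>, u) * (1 - path (\<omega>, u)) / 2 * f'' (path (\<omega>, u))))"
proof -
  let ?h = "\<lambda>y. y * (1 - y) / 2 * f'' y"
  have fm[measurable]: "f \<in> borel_measurable borel"
    using d1 by (intro borel_measurable_continuous_onI)
      (metis DERIV_isCont continuous_at_imp_continuous_on)
  have hm[measurable]: "?h \<in> borel_measurable borel"
    using c2 by (intro borel_measurable_continuous_onI) (intro continuous_intros, auto)
  have Fm: "(\<lambda>p. ?h (path p)) \<in> borel_measurable (M \<Otimes>\<^sub>M lborel)" by measurable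
  have Fb: "\<And>\<omega> v. \<omega> \<in> space M \<Longrightarrow> \<bar>?h (path (\<omega>, v))\<bar> \<le> C" using bh path_in_unit by blast
  have "space M \<in> natural_events M X 0"
    using sigma_sets.Compl[OF sigma_sets.Empty] unfolding natural_events_def by simp
  then have MG: "expectation (\<lambda>\<omega>. indicator (space M) \<omega> *
               (f (X s \<omega>) - f (X 0 \<omega>) -
                (LBINT u=ereal 0..ereal s. X u \<omega> * (1 - X u \<omega>) / 2 * f'' (X u \<omega>)))) = 0"
    using martingale_problem[OF d1 d2 c2 order_refl s] by simp
  have lb: "(LBINT u=ereal 0..ereal s. X u \<omega> * (1 - X u \<omega>) / 2 * f'' (X u \<omega>))
      = (LBINT u=0..s. ?h (path (\<omega>, u)))" for \<omega>
    unfolding zero_ereal_def[symmetric] by (intro interval_integral_cong_nonneg[OF s]) (simp add: path_nonneg)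
  have i1: "integrable M (\<lambda>\<omega>. f (X s \<omega>))"
  proof (rule integrable_const_bound[where B=C])
    have [measurable]: "X s \<in> borel_measurable M" using measurable_X s by blast
    show "(\<lambda>\<omega>. f (X s \<omega>)) \<in> borel_measurable M" by measurable
    show "AE \<omega> in M. norm (f (X s \<omega>)) \<le> C" using bf X_in_unit s by (intro AE_I2) auto
  qed
  note i2 = Fubini_LBINT_bounded(2)[OF finite_measure_axioms Fm Fb s]
  have "0 = expectation (\<lambda>\<omega>. f (X s \<omega>) - f x - (LBINT u=0..s. ?h (path (\<omega>, u))))"
    using MG unfolding lb by (simp add: X_0 cong: Bochner_Integration.integral_cong)
  also have "\<dots> = expectation (\<lambda>\<omega>. f (X s \<omega>)) - f x - expectation (\<lambda>\<omega>. LBINT u=0..s. ?h (path (\<omega>, u)))"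
    using i1 i2 by (simp add: prob_space)
  also have "expectation (\<lambda>\<omega>. LBINT u=0..s. ?h (path (\<omega>, u))) = (LBINT u=0..s. expectation (\<lambda>\<omega>. ?h (path (\<omega>, u))))"
    using Fubini_LBINT_bounded(1)[OF finite_measure_axioms Fm Fb s] by simp
  finally show ?thesis by simp
qed

definition moment :: "nat \<Rightarrow> real \<Rightarrow> real" where
  "moment k u = expectation (\<lambda>\<omega>. path (\<omega>, u) ^ k)"

lemma integrable_path_power: "integrable M (\<lambda>\<omega>. path (\<omega>, u) ^ k)"
  using path_in_unit by (intro integrable_const_bound[where B=1]) (auto intro!: AE_I2 power_le_one)

lemma abs_moment_le_1: "\<bar>moment k u\<bar> \<le> 1"
proof -
  have "\<bar>moment k u\<bar> \<le> expectation (\<lambda>\<omega>. 1)"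
    unfolding moment_def using path_in_unit integrable_path_power
    by (intro order.trans[OF integral_abs_bound] integral_mono) (auto intro!: power_le_one)
  then show ?thesis by (simp add: prob_space)
qed

lemma borel_measurable_moment [measurable]: "moment k \<in> borel_measurable borel"
  unfolding moment_def[abs_def]
  using borel_measurable_integral_fst[OF sigma_finite_measure_axioms, of "\<lambda>p. path p ^ k"] by simp

lemma moment_0: "moment k 0 = x ^ k"
proof -
  have "moment k 0 = expectation (\<lambda>\<omega>. x ^ k)"
    unfolding moment_def by (intro Bochner_Integration.integral_cong) (simp_all add: path_nonneg X_0)
  then show ?thesis by (simp add: prob_space)
qed

lemma moment_integral_equation:
  assumes s: "0 \<le> s"
  shows "moment k s = moment k 0 + (LBINT u=0..s. coal_rate k * (moment (k - 1) u - moment k u))"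
proof -
  let ?f2 = "\<lambda>y::real. real k * real (k - 1) * y ^ (k - 2)"
  have d1: "((\<lambda>y. y ^ k) has_real_derivative real k * y ^ (k - 1)) (at y)" for y :: real
    by (auto intro!: derivative_eq_intros)
  have d2: "((\<lambda>y. real k * y ^ (k - 1)) has_real_derivative ?f2 y) (at y)" for y :: real
    by (auto intro!: derivative_eq_intros simp: numeral_2_eq_2)
  have gen: "\<bar>y * (1 - y) / 2 * ?f2 y\<bar> \<le> 1 + coal_rate k" if "y \<in> {0..1}" for y
  proof -
    have "\<bar>y ^ (k - 1) - y ^ k\<bar> \<le> 1"
      using that by (smt (verit) atLeastAtMost_iff power_le_one zero_le_power)
    then show ?thesis
      unfolding WF_generator_power using coal_rate_nonneg[of k]
      by (simp add: abs_mult) (smt (verit) mult_left_le)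
  qed
  have "expectation (\<lambda>\<omega>. X s \<omega> ^ k)
      = x ^ k + (LBINT u=0..s. expectation (\<lambda>\<omega>. path (\<omega>, u) * (1 - path (\<omega>, u)) / 2 * ?f2 (path (\<omega>, u))))"
  proof (rule dynkin_formula[OF d1 d2 _ s _ gen])
    show "\<bar>y ^ k\<bar> \<le> 1 + coal_rate k" if "y \<in> {0..1}" for y :: real
      using that power_le_one[of y k] coal_rate_nonneg[of k] by auto
  qed (intro continuous_intros)
  also have "\<dots> = x ^ k + (LBINT u=0..s. coal_rate k * (moment (k - 1) u - moment k u))"
    unfolding WF_generator_power moment_def using integrable_path_power by simp
  finally show ?thesis
    using s by (simp add: moment_0 moment_def[of k s] path_nonneg)
qed

lemma moment_derivative_bounded: "\<bar>coal_rate k * (moment (k - 1) u - moment k u)\<bar> \<le> 2 * coal_rate k"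
proof -
  have "\<bar>moment (k - 1) u - moment k u\<bar> \<le> 2"
    using abs_moment_le_1[of "k - 1" u] abs_moment_le_1[of k u] by linarith
  then show ?thesis
    using coal_rate_nonneg[of k] by (simp add: abs_mult mult_left_mono mult.commute)
qed

lemma borel_measurable_moment_derivative:
  "(\<lambda>u. coal_rate k * (moment (k - 1) u - moment k u)) \<in> borel_measurable borel"
  by measurable

lemma moment_continuous_on: "continuous_on {0..t} (moment k)"
  by (rule integral_equation_continuous_on[OF moment_integral_equation
        borel_measurable_moment_derivative moment_derivative_bounded])

lemma moment_has_derivative:
  assumes "u \<in> {0..t}"
  shows "(moment k has_real_derivative coal_rate k * (moment (k - 1) u - moment k u)) (at u within {0..t})"
  by (rule integral_equation_has_derivative[OF moment_integral_equation
        borel_measurable_moment_derivative moment_derivative_bounded _ assms])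
    (auto intro!: continuous_intros moment_continuous_on)

end

lemma WF_expectation_eq_tail_sum:
  assumes K: "kingman Mk T m" and WF: "is_neutral_WF M X x" and u: "0 \<le> u"
  shows "integral\<^sup>L M (\<lambda>\<omega>. 1 - X u \<omega> ^ m - (1 - X u \<omega>) ^ m)
       = (\<Sum>k=1..<m. (x ^ k * (1 - x) + x * (1 - x) ^ k) * kingman.tail Mk T m k u)"
proof -
  interpret K: kingman Mk T m by (rule K)
  interpret W: neutral_WF M X x by (rule neutral_WF.intro[OF WF])
  interpret W': neutral_WF M "\<lambda>t \<omega>. 1 - X t \<omega>" "1 - x"
    by (rule neutral_WF.intro[OF W.is_neutral_WF_reflect])
  have "W.moment m u = x + (\<Sum>k=1..<m. K.tail k u * (x ^ Suc k - x ^ k))"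
    and "W'.moment m u = (1 - x) + (\<Sum>k=1..<m. K.tail k u * ((1 - x) ^ Suc k - (1 - x) ^ k))"
    using K.transport_by_tail[OF u W.moment_has_derivative]
      K.transport_by_tail[OF u W'.moment_has_derivative]
    by (simp_all add: W.moment_0 W'.moment_0)
  moreover have "integral\<^sup>L M (\<lambda>\<omega>. 1 - X u \<omega> ^ m - (1 - X u \<omega>) ^ m) = 1 - W.moment m u - W'.moment m u"
    using W.integrable_path_power[of u m] W'.integrable_path_power[of u m] u
    by (simp add: W.moment_def W'.moment_def W.prob_space W.path_nonneg W'.path_nonneg)
  ultimately have "integral\<^sup>L M (\<lambda>\<omega>. 1 - X u \<omega> ^ m - (1 - X u \<omega>) ^ m)
      = 1 - (x + (\<Sum>k=1..<m. K.tail k u * (x ^ Suc k - x ^ k)))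
          - ((1 - x) + (\<Sum>k=1..<m. K.tail k u * ((1 - x) ^ Suc k - (1 - x) ^ k)))"
    by simp
  also have "\<dots> = (\<Sum>k=1..<m. (x ^ k * (1 - x) + x * (1 - x) ^ k) * K.tail k u)"
    by (simp add: sum_negf[symmetric] sum_subtractf[symmetric] sum.distrib[symmetric] algebra_simps)
  finally show ?thesis .
qed

lemma WF_expected_integral_eq_tail_sum:
  assumes K: "kingman Mk T m" and WF: "is_neutral_WF M X x" and t: "0 \<le> t"
  shows "integral\<^sup>L M (\<lambda>\<omega>. LBINT u=0..t. 1 - X u \<omega> ^ m - (1 - X u \<omega>) ^ m)
       = (\<Sum>k=1..<m. (x ^ k * (1 - x) + x * (1 - x) ^ k) * integral {0..t} (kingman.tail Mk T m k))"
proof -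
  interpret W: neutral_WF M X x by (rule neutral_WF.intro[OF WF])
  define g where "g y = 1 - y ^ m - (1 - y) ^ m" for y :: real
  have gm: "(\<lambda>p. g (W.path p)) \<in> borel_measurable (M \<Otimes>\<^sub>M lborel)"
    unfolding g_def by measurable
  have g_bounded: "\<bar>g (W.path (\<omega>, u))\<bar> \<le> 3" if "\<omega> \<in> space M" for \<omega> u
  proof -
    have "0 \<le> W.path (\<omega>, u)" "0 \<le> 1 - W.path (\<omega>, u)" "W.path (\<omega>, u) \<le> 1"
      using W.path_in_unit[OF that, of u] by auto
    then have "0 \<le> W.path (\<omega>, u) ^ m" "W.path (\<omega>, u) ^ m \<le> 1"
      "0 \<le> (1 - W.path (\<omega>, u)) ^ m" "(1 - W.path (\<omega>, u)) ^ m \<le> 1"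
      by (simp_all add: power_le_one)
    then show ?thesis
      unfolding g_def abs_le_iff by linarith
  qed
  have "integral\<^sup>L M (\<lambda>\<omega>. LBINT u=0..t. 1 - X u \<omega> ^ m - (1 - X u \<omega>) ^ m)
      = integral\<^sup>L M (\<lambda>\<omega>. LBINT u=0..t. g (W.path (\<omega>, u)))"
    by (intro Bochner_Integration.integral_cong refl interval_integral_cong_nonneg[OF t])
      (simp add: g_def W.path_nonneg)
  also have "\<dots> = (LBINT u=0..t. integral\<^sup>L M (\<lambda>\<omega>. g (W.path (\<omega>, u))))"
    using Fubini_LBINT_bounded(1)[OF W.finite_measure_axioms gm g_bounded t] by simp
  also have "\<dots> = (LBINT u=0..t. (\<Sum>k=1..<m. (x ^ k * (1 - x) + x * (1 - x) ^ k) * kingman.tail Mk T m k u))"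
    using WF_expectation_eq_tail_sum[OF K WF]
    by (intro interval_integral_cong_nonneg[OF t]) (simp add: g_def W.path_nonneg)
  also have "\<dots> = (\<Sum>k=1..<m. (x ^ k * (1 - x) + x * (1 - x) ^ k) * integral {0..t} (kingman.tail Mk T m k))"
    by (rule kingman.interval_integral_tail_sum[OF K t])
  finally show ?thesis .
qed

lemma scaled_WF_weight_tendsto:
  assumes k: "1 \<le> k"
  shows "(\<lambda>N. real N * ((1 / real N) ^ k * (1 - 1 / real N) + 1 / real N * (1 - 1 / real N) ^ k))
         \<longlonglongrightarrow> (if k = 1 then 2 else 1)"
proof -
  have "(\<lambda>N. (1 / real N) ^ (k - 1) * (1 - 1 / real N) + (1 - 1 / real N) ^ k)
         \<longlonglongrightarrow> 0 ^ (k - 1) * (1 - 0) + (1 - 0) ^ k"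
    by (intro tendsto_intros lim_1_over_n)
  moreover have "0 ^ (k - 1) * (1 - 0) + (1 - 0) ^ k = (if k = 1 then 2 else (1::real))"
    using k by auto
  ultimately have lim: "(\<lambda>N. (1 / real N) ^ (k - 1) * (1 - 1 / real N) + (1 - 1 / real N) ^ k)
         \<longlonglongrightarrow> (if k = 1 then 2 else 1)"
    by simp
  have "(1 / real N) ^ (k - 1) * (1 - 1 / real N) + (1 - 1 / real N) ^ k
      = real N * ((1 / real N) ^ k * (1 - 1 / real N) + 1 / real N * (1 - 1 / real N) ^ k)"
    if "1 \<le> N" for N
    using that k by (cases k) (simp_all add: field_simps)
  then show ?thesis
    by (intro Lim_transform_eventually[OF lim] eventually_sequentiallyI[of 1])
qed

theorem mainTheorem8:
  fixes \<theta> t :: real and m :: nat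
    and M :: "nat \<Rightarrow> 'a measure" and X :: "nat \<Rightarrow> real \<Rightarrow> 'a \<Rightarrow> real"
    and Mk :: "'b measure" and T :: "nat \<Rightarrow> 'b \<Rightarrow> real"
  assumes "\<theta> > 0" and "m \<ge> 2" and "t \<ge> 0"
    and WF: "\<And>N. N \<ge> 1 \<Longrightarrow> is_neutral_WF (M N) (X N) (1 / real N)"
    and K: "kingman_times Mk T m"
  shows "(\<lambda>N. real N * \<theta> *
            integral\<^sup>L (M N) (\<lambda>\<omega>. LBINT u=0..t. 1 - X N u \<omega> ^ m - (1 - X N u \<omega>) ^ m))
          \<longlonglongrightarrow> \<theta> * (LBINT u=0..t.
                integral\<^sup>L Mk (\<lambda>\<omega>. real (kingman_state m T u \<omega>))
                - measure Mk {\<omega>\<in>space Mk. kingman_state m T u \<omega> = 1})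
     \<and> \<theta> * (LBINT u=0..t.
                integral\<^sup>L Mk (\<lambda>\<omega>. real (kingman_state m T u \<omega>))
                - measure Mk {\<omega>\<in>space Mk. kingman_state m T u \<omega> = 1})
         = \<theta> * (\<Sum>k=2..m. (1 + (-1) ^ k) * (1 - exp (- real (k choose 2) * t))
                 * (2 * real k - 1) / real (k choose 2)
                 * (Gamma (real m + 1) / Gamma (real m - real k + 1))
                 / (Gamma (real m + real k) / Gamma (real m)))"
proof -
  have Kg: "kingman Mk T m"
    using K \<open>m \<ge> 2\<close> by (rule kingman.intro)
  define A where "A k = integral {0..t} (kingman.tail Mk T m k)" for k
  define w where "w N k = (1 / real N) ^ k * (1 - 1 / real N) + 1 / real N * (1 - 1 / real N) ^ k"
    for N :: nat and k :: nat
  have lim: "(\<lambda>N. \<theta> * (\<Sum>k=1..<m. (real N * w N k) * A k))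
      \<longlonglongrightarrow> \<theta> * (\<Sum>k=1..<m. (if k = 1 then 2 else 1) * A k)"
    unfolding w_def by (intro tendsto_intros scaled_WF_weight_tendsto) auto
  have "\<theta> * (\<Sum>k=1..<m. (real N * w N k) * A k) = real N * \<theta> *
      integral\<^sup>L (M N) (\<lambda>\<omega>. LBINT u=0..t. 1 - X N u \<omega> ^ m - (1 - X N u \<omega>) ^ m)" if "1 \<le> N" for N
    using WF_expected_integral_eq_tail_sum[OF Kg WF[OF that] \<open>t \<ge> 0\<close>]
    by (simp add: w_def A_def sum_distrib_left mult_ac)
  then have conv: "(\<lambda>N. real N * \<theta> *
        integral\<^sup>L (M N) (\<lambda>\<omega>. LBINT u=0..t. 1 - X N u \<omega> ^ m - (1 - X N u \<omega>) ^ m))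
      \<longlonglongrightarrow> \<theta> * (\<Sum>k=1..<m. (if k = 1 then 2 else 1) * A k)"
    by (intro Lim_transform_eventually[OF lim] eventually_sequentiallyI[of 1])
  have coalescent: "(LBINT u=0..t. integral\<^sup>L Mk (\<lambda>\<omega>. real (kingman_state m T u \<omega>))
                - measure Mk {\<omega>\<in>space Mk. kingman_state m T u \<omega> = 1})
      = (\<Sum>k=1..<m. (if k = 1 then 2 else 1) * A k)"
    unfolding A_def by (rule kingman.interval_integral_expected_state_minus_prob_1[OF Kg \<open>t \<ge> 0\<close>])
  show ?thesis
    using kingman.interval_integral_expected_state_minus_prob_1_closed_form[OF Kg \<open>t \<ge> 0\<close>]
    unfolding coalescent by (intro conjI conv) (erule arg_cong)
qed

end
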